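(* Let $X=(X_1,\dots,X_d)$ be a non-degenerate $d$-dimensional $1$-Meixner random vector with $E[X_k]=0$ and $E[X_iX_j]=\delta_{i,j}$ for all $i,j,k$, so that $[U_i,X_j]=\sum_{k=1}^d\alpha_{i,j,k}X_k+\delta_{i,j}I$ for real numbers $\alpha_{i,j,k}$. Then the Laplace transform $\varphi(t_1,\dots,t_d):=E[\exp(t_1X_1+\cdots+t_dX_d)]$ satisfies, for all $\mathbf t$ in a neighborhood $V$ of $\mathbf 0$ and all $i\in\{1,\dots,d\}$, $$\frac{\partial\varphi}{\partial t_i}=\sum_{1\le j,k\le d}\alpha_{i,j,k}\,t_j\,\frac{\partial\varphi}{\partial t_k}+t_i\varphi .$$
   Context: Let $X_1,\dots,X_d$ be real random variables on $(\Omega,\mathcal F,P)$ with finite moments of all orders. $F$ is the space of polynomial random variables $f(X_1,\dots,X_d)$ (complex coefficients), $F_n$ those of degree $\le n$, $G_0=F_0$, $G_n=F_n\ominus F_{n-1}$ in $L^2(P)$. For $f\in G_n$, $X_if\in G_{n-1}\oplus G_n\oplus G_{n+1}$; its components define $a^-(i)f,a^0(i)f,a^+(i)f$ respectively, extended linearly to $F$. $U_i:=a^-(i)+\tfrac12a^0(i)$. $(X_1,\dots,X_d)$ is a $d$-dimensional $1$-Meixner random vector if there are reals $\alpha_{i,j,k},\beta_{i,j}$ with $[U_i,X_j]=\sum_k\alpha_{i,j,k}X_k+\beta_{i,j}I$ on $F$ for all $i,j$ (with $X_j$ the multiplication operator, $I$ the identity); it is non-degenerate if $I,X_1,\dots,X_d$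 are linearly independent operators on $F$. *)

theory Defs
  imports "HOL-Probability.Probability"
begin

text \<open>Random vector: X :: 'd \<Rightarrow> 'a \<Rightarrow> real, indexed by a finite type 'd (d = CARD('d)).
  Elements of L2(P) are identified a.e.; equalities of operators on F are stated a.e.\<close>

definition monomial_rv :: "('d::finite \<Rightarrow> 'a \<Rightarrow> real) \<Rightarrow> ('d \<Rightarrow> nat) \<Rightarrow> 'a \<Rightarrow> complex" where
  "monomial_rv X m = (\<lambda>\<omega>. complex_of_real (\<Prod>i\<in>UNIV. X i \<omega> ^ m i))"

definition mdeg :: "('d::finite \<Rightarrow> nat) \<Rightarrow> nat" where
  "mdeg m = (\<Sum>i\<in>UNIV. m i)"

definition polyF :: "('d::finite \<Rightarrow> 'a \<Rightarrow> real) \<Rightarrow> nat \<Rightarrow> ('a \<Rightarrow> complex) set" where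
  "polyF X n = {f. \<exists>S c. finite S \<and> (\<forall>m\<in>S. mdeg m \<le> n) \<and>
       f = (\<lambda>\<omega>. \<Sum>m\<in>S. c m * monomial_rv X m \<omega>)}"

definition polyAll :: "('d::finite \<Rightarrow> 'a \<Rightarrow> real) \<Rightarrow> ('a \<Rightarrow> complex) set" where
  "polyAll X = (\<Union>n. polyF X n)"

definition cinner :: "'a measure \<Rightarrow> ('a \<Rightarrow> complex) \<Rightarrow> ('a \<Rightarrow> complex) \<Rightarrow> complex" where
  "cinner M f g = integral\<^sup>L M (\<lambda>\<omega>. f \<omega> * cnj (g \<omega>))"

definition Gsp :: "'a measure \<Rightarrow> ('d::finite \<Rightarrow> 'a \<Rightarrow> real) \<Rightarrow> nat \<Rightarrow> ('a \<Rightarrow> complex) set" where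
  "Gsp M X n = (if n = 0 then polyF X 0
     else {f \<in> polyF X n. \<forall>g\<in>polyF X (n - 1). cinner M f g = 0})"

text \<open>Orthogonal projection onto G_n (a representative; unique up to a.e. equality).\<close>
definition projG :: "'a measure \<Rightarrow> ('d::finite \<Rightarrow> 'a \<Rightarrow> real) \<Rightarrow> nat \<Rightarrow> ('a \<Rightarrow> complex) \<Rightarrow> ('a \<Rightarrow> complex)" where
  "projG M X n f = (SOME g. g \<in> Gsp M X n \<and> (\<forall>h\<in>Gsp M X n. cinner M (\<lambda>\<omega>. f \<omega> - g \<omega>) h = 0))"

definition pdeg :: "('d::finite \<Rightarrow> 'a \<Rightarrow> real) \<Rightarrow> ('a \<Rightarrow> complex) \<Rightarrow> nat" where
  "pdeg X f = (LEAST n. f \<in> polyF X n)"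

definition mulX :: "('d::finite \<Rightarrow> 'a \<Rightarrow> real) \<Rightarrow> 'd \<Rightarrow> ('a \<Rightarrow> complex) \<Rightarrow> ('a \<Rightarrow> complex)" where
  "mulX X i f = (\<lambda>\<omega>. complex_of_real (X i \<omega>) * f \<omega>)"

text \<open>For g in G_n: a^-(i) g = component of X_i g in G_(n-1) (zero for n = 0),
  a^0(i) g = component in G_n, a^+(i) g = component in G_(n+1); extended linearly via
  f = sum over n of the G_n-components of f.\<close>
definition a_minus :: "'a measure \<Rightarrow> ('d::finite \<Rightarrow> 'a \<Rightarrow> real) \<Rightarrow> 'd \<Rightarrow> ('a \<Rightarrow> complex) \<Rightarrow> ('a \<Rightarrow> complex)" where
  "a_minus M X i f = (\<lambda>\<omega>. \<Sum>n\<le>pdeg X f.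
      if n = 0 then 0 else projG M X (n - 1) (mulX X i (projG M X n f)) \<omega>)"

definition a_zero :: "'a measure \<Rightarrow> ('d::finite \<Rightarrow> 'a \<Rightarrow> real) \<Rightarrow> 'd \<Rightarrow> ('a \<Rightarrow> complex) \<Rightarrow> ('a \<Rightarrow> complex)" where
  "a_zero M X i f = (\<lambda>\<omega>. \<Sum>n\<le>pdeg X f. projG M X n (mulX X i (projG M X n f)) \<omega>)"

definition Uop :: "'a measure \<Rightarrow> ('d::finite \<Rightarrow> 'a \<Rightarrow> real) \<Rightarrow> 'd \<Rightarrow> ('a \<Rightarrow> complex) \<Rightarrow> ('a \<Rightarrow> complex)" where
  "Uop M X i f = (\<lambda>\<omega>. a_minus M X i f \<omega> + a_zero M X i f \<omega> / 2)"

definition meixner1 :: "'a measure \<Rightarrow> ('d::finite \<Rightarrow> 'a \<Rightarrow> real) \<Rightarrow> ('d \<Rightarrow> 'd \<Rightarrow> 'd \<Rightarrow> real) \<Rightarrow> ('d \<Rightarrow> 'd \<Rightarrow> real) \<Rightarrow> bool" where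
  "meixner1 M X \<alpha> \<beta> \<longleftrightarrow> (\<forall>i j. \<forall>f\<in>polyAll X. AE \<omega> in M.
      Uop M X i (mulX X j f) \<omega> - mulX X j (Uop M X i f) \<omega>
      = (\<Sum>k\<in>UNIV. complex_of_real (\<alpha> i j k) * mulX X k f \<omega>) + complex_of_real (\<beta> i j) * f \<omega>)"

definition nondegenerate :: "'a measure \<Rightarrow> ('d::finite \<Rightarrow> 'a \<Rightarrow> real) \<Rightarrow> bool" where
  "nondegenerate M X \<longleftrightarrow> (\<forall>(c0::complex) c. (\<forall>f\<in>polyAll X. AE \<omega> in M.
      c0 * f \<omega> + (\<Sum>k\<in>UNIV. c k * mulX X k f \<omega>) = 0) \<longrightarrow> c0 = 0 \<and> (\<forall>k. c k = 0))"

definition laplace :: "'a measure \<Rightarrow> ('d::finite \<Rightarrow> 'a \<Rightarrow> real) \<Rightarrow> real^'d \<Rightarrow> real" where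
  "laplace M X t = integral\<^sup>L M (\<lambda>\<omega>. exp (\<Sum>k\<in>UNIV. t $ k * X k \<omega>))"

definition partial :: "(real^'d::finite \<Rightarrow> real) \<Rightarrow> 'd \<Rightarrow> real^'d \<Rightarrow> real" where
  "partial \<phi> i t = deriv (\<lambda>s. \<phi> (t + s *\<^sub>R axis i 1)) 0"

definition has_partial :: "(real^'d::finite \<Rightarrow> real) \<Rightarrow> 'd \<Rightarrow> real^'d \<Rightarrow> bool" where
  "has_partial \<phi> i t \<longleftrightarrow> (\<lambda>s. \<phi> (t + s *\<^sub>R axis i 1)) differentiable (at 0)"

end

theory Submission
  imports Defs
begin

text \<open>
  For every polynomial \<open>f\<close> one has \<open>E[U\<^sub>i f] = E[X\<^sub>i f]\<close>: only the \<open>G\<^sub>0\<close>-components of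
  \<open>a\<^sup>-(i) f\<close> and \<open>a\<^sup>0(i) f\<close> survive the expectation, the first equals \<open>E[X\<^sub>i f]\<close> because
  \<open>X\<^sub>i \<in> G\<^sub>1\<close>, and the second vanishes because \<open>E[X\<^sub>i] = 0\<close>. On the other hand \<open>U\<^sub>i 1 = 0\<close> and the
  commutation relation determine \<open>U\<^sub>i\<close> on monomials. For \<open>y = \<Sum>\<^sub>k t\<^sub>k X\<^sub>k\<close> this gives
  \<open>\<beta> = \<delta>\<close> and the moment recursion
  \<open>E[X\<^sub>i y\<^bsup>n+1\<^esup>] = (n+1) (\<Sum>\<^bsub>j,k\<^esub> \<alpha>\<^bsub>ijk\<^esub> t\<^sub>j E[X\<^sub>k y\<^sup>n] + t\<^sub>i E[y\<^sup>n])\<close>.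
  The recursion bounds \<open>|E[y\<^sup>n]|\<close> by \<open>n! (C |t|\<^sub>1)\<^sup>n\<close>, so \<open>exp |y|\<close> is integrable near \<open>0\<close>, the Laplace
  transform can be differentiated under the integral, and dividing the recursion by \<open>(n+1)!\<close> and
  summing over \<open>n\<close> yields the differential equation.
\<close>

section \<open>Polynomial random variables\<close>

inductive_set poly_rv :: "('d \<Rightarrow> 'a \<Rightarrow> real) \<Rightarrow> ('a \<Rightarrow> real) set" for X
  where
    poly_rv_const: "(\<lambda>\<omega>. c) \<in> poly_rv X"
  | poly_rv_var: "X k \<in> poly_rv X"
  | poly_rv_add: "f \<in> poly_rv X \<Longrightarrow> g \<in> poly_rv X \<Longrightarrow> (\<lambda>\<omega>. f \<omega> + g \<omega>) \<in> poly_rv X"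
  | poly_rv_mult: "f \<in> poly_rv X \<Longrightarrow> g \<in> poly_rv X \<Longrightarrow> (\<lambda>\<omega>. f \<omega> * g \<omega>) \<in> poly_rv X"

lemma poly_rv_sum:
  "finite A \<Longrightarrow> (\<And>a. a \<in> A \<Longrightarrow> F a \<in> poly_rv X) \<Longrightarrow> (\<lambda>\<omega>. \<Sum>a\<in>A. F a \<omega>) \<in> poly_rv X"
  by (induction A rule: finite_induct) (auto intro: poly_rv.intros)

lemma poly_rv_prod:
  "finite A \<Longrightarrow> (\<And>a. a \<in> A \<Longrightarrow> F a \<in> poly_rv X) \<Longrightarrow> (\<lambda>\<omega>. \<Prod>a\<in>A. F a \<omega>) \<in> poly_rv X"
  by (induction A rule: finite_induct) (auto intro: poly_rv.intros)

lemma poly_rv_power: "f \<in> poly_rv X \<Longrightarrow> (\<lambda>\<omega>. f \<omega> ^ n) \<in> poly_rv X"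
  by (induction n) (auto intro: poly_rv.intros)

lemma poly_rv_cmult: "f \<in> poly_rv X \<Longrightarrow> (\<lambda>\<omega>. c * f \<omega>) \<in> poly_rv X"
  by (rule poly_rv_mult[OF poly_rv_const])

lemma poly_rv_diff: "f \<in> poly_rv X \<Longrightarrow> g \<in> poly_rv X \<Longrightarrow> (\<lambda>\<omega>. f \<omega> - g \<omega>) \<in> poly_rv X"
  using poly_rv_add[OF _ poly_rv_cmult[of g X "-1"]] by simp

lemma abs_add_power_le: "\<bar>a + b\<bar> ^ n \<le> 2 ^ n * (\<bar>a\<bar> ^ n + \<bar>b\<bar> ^ n)" for a b :: real
proof -
  have "\<bar>a + b\<bar> ^ n \<le> (2 * max \<bar>a\<bar> \<bar>b\<bar>) ^ n"
    by (intro power_mono) auto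
  also have "\<dots> = 2 ^ n * max \<bar>a\<bar> \<bar>b\<bar> ^ n"
    by (simp add: power_mult_distrib)
  also have "max \<bar>a\<bar> \<bar>b\<bar> ^ n \<le> \<bar>a\<bar> ^ n + \<bar>b\<bar> ^ n"
    by (simp add: max_def)
  finally show ?thesis
    by simp
qed

lemma abs_mult_power_le: "\<bar>a * b\<bar> ^ n \<le> \<bar>a\<bar> ^ (2 * n) + \<bar>b\<bar> ^ (2 * n)" for a b :: real
proof -
  have "\<bar>a * b\<bar> ^ n \<le> 2 * (\<bar>a\<bar> ^ n * \<bar>b\<bar> ^ n)"
    by (simp add: abs_mult power_mult_distrib)
  also have "\<dots> \<le> (\<bar>a\<bar> ^ n)\<^sup>2 + (\<bar>b\<bar> ^ n)\<^sup>2"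
    using sum_squares_bound[of "\<bar>a\<bar> ^ n" "\<bar>b\<bar> ^ n"] by simp
  finally show ?thesis
    by (simp add: power_mult mult.commute)
qed

definition has_moments :: "'a measure \<Rightarrow> ('a \<Rightarrow> real) \<Rightarrow> bool" where
  "has_moments M f \<longleftrightarrow> f \<in> borel_measurable M \<and> (\<forall>n. integrable M (\<lambda>\<omega>. \<bar>f \<omega>\<bar> ^ n))"

lemma has_moments_add:
  assumes "has_moments M f" "has_moments M g"
  shows "has_moments M (\<lambda>\<omega>. f \<omega> + g \<omega>)"
  unfolding has_moments_def
proof (intro conjI allI)
  show meas: "(\<lambda>\<omega>. f \<omega> + g \<omega>) \<in> borel_measurable M"
    using assms by (auto simp: has_moments_def)
  fix n
  have "integrable M (\<lambda>\<omega>. 2 ^ n * (\<bar>f \<omega>\<bar> ^ n + \<bar>g \<omega>\<bar> ^ n))"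
    using assms by (simp add: has_moments_def)
  then show "integrable M (\<lambda>\<omega>. \<bar>f \<omega> + g \<omega>\<bar> ^ n)"
  proof (rule Bochner_Integration.integrable_bound)
    show "AE \<omega> in M. norm (\<bar>f \<omega> + g \<omega>\<bar> ^ n) \<le> norm (2 ^ n * (\<bar>f \<omega>\<bar> ^ n + \<bar>g \<omega>\<bar> ^ n))"
      using abs_add_power_le by (intro AE_I2) (simp add: abs_mult)
  qed (use meas in measurable)
qed

lemma has_moments_mult:
  assumes "has_moments M f" "has_moments M g"
  shows "has_moments M (\<lambda>\<omega>. f \<omega> * g \<omega>)"
  unfolding has_moments_def
proof (intro conjI allI)
  show meas: "(\<lambda>\<omega>. f \<omega> * g \<omega>) \<in> borel_measurable M"
    using assms by (auto simp: has_moments_def)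
  fix n
  have "integrable M (\<lambda>\<omega>. \<bar>f \<omega>\<bar> ^ (2 * n) + \<bar>g \<omega>\<bar> ^ (2 * n))"
    using assms by (simp add: has_moments_def)
  then show "integrable M (\<lambda>\<omega>. \<bar>f \<omega> * g \<omega>\<bar> ^ n)"
  proof (rule Bochner_Integration.integrable_bound)
    show "AE \<omega> in M. norm (\<bar>f \<omega> * g \<omega>\<bar> ^ n) \<le> norm (\<bar>f \<omega>\<bar> ^ (2 * n) + \<bar>g \<omega>\<bar> ^ (2 * n))"
      using abs_mult_power_le by (intro AE_I2) simp
  qed (use meas in measurable)
qed

lemma has_moments_integrable:
  assumes "has_moments M f"
  shows "integrable M f"
proof -
  have "integrable M (\<lambda>\<omega>. \<bar>f \<omega>\<bar> ^ 1)" "f \<in> borel_measurable M"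
    using assms unfolding has_moments_def by blast+
  then show ?thesis
    by (simp add: integrable_abs_iff)
qed

locale finite_moments = prob_space M for M :: "'a measure" +
  fixes X :: "'d::finite \<Rightarrow> 'a \<Rightarrow> real"
  assumes X_measurable [measurable]: "\<And>i. X i \<in> borel_measurable M"
    and X_moments: "\<And>i n. integrable M (\<lambda>\<omega>. \<bar>X i \<omega>\<bar> ^ n)"
begin

lemma has_moments_poly_rv: "f \<in> poly_rv X \<Longrightarrow> has_moments M f"
proof (induction rule: poly_rv.induct)
  case (poly_rv_const c)
  then show ?case
    by (simp add: has_moments_def)
next
  case (poly_rv_var k)
  then show ?case
    by (simp add: has_moments_def X_moments)
qed (simp_all add: has_moments_add has_moments_mult)

lemma integrable_poly_rv: "f \<in> poly_rv X \<Longrightarrow> integrable M f"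
  by (rule has_moments_integrable[OF has_moments_poly_rv])

lemma borel_measurable_poly_rv: "f \<in> poly_rv X \<Longrightarrow> f \<in> borel_measurable M"
  using has_moments_poly_rv has_moments_def by blast

end

section \<open>Orthogonal projections onto the chaos spaces\<close>

definition monomials_le :: "nat \<Rightarrow> ('d::finite \<Rightarrow> nat) set" where
  "monomials_le n = {m. mdeg m \<le> n}"

definition poly_of_coeffs ::
    "('d::finite \<Rightarrow> 'a \<Rightarrow> real) \<Rightarrow> nat \<Rightarrow> (('d \<Rightarrow> nat) \<Rightarrow> complex) \<Rightarrow> 'a \<Rightarrow> complex" where
  "poly_of_coeffs X n c = (\<lambda>\<omega>. \<Sum>m\<in>monomials_le n. c m * monomial_rv X m \<omega>)"

lemma finite_monomials_le: "finite (monomials_le n :: ('d::finite \<Rightarrow> nat) set)"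
proof (rule finite_subset)
  show "monomials_le n \<subseteq> PiE (UNIV :: 'd set) (\<lambda>_. {..n})"
  proof
    fix m :: "'d \<Rightarrow> nat"
    assume "m \<in> monomials_le n"
    then have "m i \<le> n" for i
      using member_le_sum[of i UNIV m] by (simp add: monomials_le_def mdeg_def)
    then show "m \<in> PiE UNIV (\<lambda>_. {..n})"
      by auto
  qed
qed (simp add: finite_PiE)

lemma polyF_eq_range: "polyF X n = range (poly_of_coeffs X n)"
proof
  show "polyF X n \<subseteq> range (poly_of_coeffs X n)"
  proof
    fix f
    assume "f \<in> polyF X n"
    then obtain S c where S: "finite S" "S \<subseteq> monomials_le n"
      and f: "f = (\<lambda>\<omega>. \<Sum>m\<in>S. c m * monomial_rv X m \<omega>)"
      unfolding polyF_def monomials_le_def by blast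
    have "f = poly_of_coeffs X n (\<lambda>m. if m \<in> S then c m else 0)"
      unfolding f poly_of_coeffs_def
      by (rule ext, rule sum.mono_neutral_cong_left[OF finite_monomials_le S(2)]) auto
    then show "f \<in> range (poly_of_coeffs X n)"
      by blast
  qed
  show "range (poly_of_coeffs X n) \<subseteq> polyF X n"
    unfolding polyF_def poly_of_coeffs_def using finite_monomials_le
    by (auto simp: monomials_le_def)
qed

lemma polyF_mono: "n \<le> n' \<Longrightarrow> polyF X n \<subseteq> polyF X n'"
  unfolding polyF_def by fastforce

lemma polyF_add: "f \<in> polyF X n \<Longrightarrow> g \<in> polyF X n \<Longrightarrow> (\<lambda>\<omega>. f \<omega> + g \<omega>) \<in> polyF X n"
proof -
  assume "f \<in> polyF X n" "g \<in> polyF X n"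
  then obtain c c' where "f = poly_of_coeffs X n c" "g = poly_of_coeffs X n c'"
    unfolding polyF_eq_range by blast
  then have "(\<lambda>\<omega>. f \<omega> + g \<omega>) = poly_of_coeffs X n (\<lambda>m. c m + c' m)"
    by (simp add: poly_of_coeffs_def sum.distrib distrib_right)
  then show ?thesis
    unfolding polyF_eq_range by blast
qed

lemma polyF_cmult: "f \<in> polyF X n \<Longrightarrow> (\<lambda>\<omega>. a * f \<omega>) \<in> polyF X n"
proof -
  assume "f \<in> polyF X n"
  then obtain c where "f = poly_of_coeffs X n c"
    unfolding polyF_eq_range by blast
  then have "(\<lambda>\<omega>. a * f \<omega>) = poly_of_coeffs X n (\<lambda>m. a * c m)"
    by (simp add: poly_of_coeffs_def sum_distrib_left mult.assoc)
  then show ?thesis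
    unfolding polyF_eq_range by blast
qed

lemma polyF_diff: "f \<in> polyF X n \<Longrightarrow> g \<in> polyF X n \<Longrightarrow> (\<lambda>\<omega>. f \<omega> - g \<omega>) \<in> polyF X n"
  using polyF_add[OF _ polyF_cmult[of g X n "-1"]] by simp

lemma polyF_sum:
  "finite K \<Longrightarrow> (\<And>k. k \<in> K \<Longrightarrow> \<phi> k \<in> polyF X n) \<Longrightarrow> (\<lambda>\<omega>. \<Sum>k\<in>K. a k * \<phi> k \<omega>) \<in> polyF X n"
proof (induction K rule: finite_induct)
  case empty
  have "(\<lambda>\<omega>. 0) = poly_of_coeffs X n (\<lambda>_. 0)"
    by (simp add: poly_of_coeffs_def)
  then show ?case
    by (simp add: polyF_eq_range)
next
  case (insert k K)
  then show ?case
    using polyF_add[OF polyF_cmult[of "\<phi> k" X n "a k"]] by simp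
qed

lemma monomial_in_polyF: "mdeg m \<le> n \<Longrightarrow> monomial_rv X m \<in> polyF X n"
  unfolding polyF_def by (intro CollectI exI[of _ "{m}"] exI[of _ "\<lambda>_. 1"]) auto

lemma polyF_0_iff: "f \<in> polyF X 0 \<longleftrightarrow> (\<exists>c. f = (\<lambda>\<omega>. c))"
proof
  assume "f \<in> polyF X 0"
  then obtain S c where "\<forall>m\<in>S. mdeg m = 0" and f: "f = (\<lambda>\<omega>. \<Sum>m\<in>S. c m * monomial_rv X m \<omega>)"
    unfolding polyF_def by auto
  then have "\<forall>m\<in>S. m = (\<lambda>_. 0)"
    by (simp add: mdeg_def fun_eq_iff)
  then have "f = (\<lambda>\<omega>. \<Sum>m\<in>S. c m)"
    unfolding f by (intro ext sum.cong) (auto simp: monomial_rv_def)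
  then show "\<exists>c. f = (\<lambda>\<omega>. c)"
    by blast
next
  assume "\<exists>c. f = (\<lambda>\<omega>. c)"
  then obtain a where "f = (\<lambda>\<omega>. a)"
    by blast
  moreover have "monomial_rv X (\<lambda>_. 0) = (\<lambda>\<omega>. 1)"
    by (simp add: monomial_rv_def)
  ultimately show "f \<in> polyF X 0"
    using polyF_cmult[OF monomial_in_polyF[of "\<lambda>_. 0" 0 X], of a] by (simp add: mdeg_def)
qed

lemma const_in_polyF: "(\<lambda>\<omega>. c) \<in> polyF X n"
  using polyF_0_iff polyF_mono by blast

lemma monomial_rv_bump:
  "monomial_rv X (m(j := Suc (m j))) \<omega> = complex_of_real (X j \<omega>) * monomial_rv X m \<omega>"
proof -
  have "(\<Prod>i\<in>UNIV. X i \<omega> ^ (m(j := Suc (m j))) i) = X j \<omega> * (\<Prod>i\<in>UNIV. X i \<omega> ^ m i)"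
    by (simp add: prod.remove[of UNIV j] mult.assoc)
  then show ?thesis
    unfolding monomial_rv_def by simp
qed

lemma mdeg_bump: "mdeg (m(j := Suc (m j))) = Suc (mdeg m)"
  unfolding mdeg_def by (simp add: sum.remove[of UNIV j])

lemma of_real_X_in_polyF: "(\<lambda>\<omega>. complex_of_real (X i \<omega>)) \<in> polyF X 1"
proof -
  have "monomial_rv X ((\<lambda>_. 0)(i := Suc 0)) = (\<lambda>\<omega>. complex_of_real (X i \<omega>))"
    using monomial_rv_bump[of X "\<lambda>_. 0" i] by (simp add: monomial_rv_def fun_eq_iff)
  moreover have "mdeg ((\<lambda>_. 0 :: nat)(i := Suc 0)) \<le> 1"
    using mdeg_bump[of "\<lambda>_. 0" i] by (simp add: mdeg_def)
  ultimately show ?thesis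
    using monomial_in_polyF by metis
qed

lemma mulX_in_polyF: "f \<in> polyF X n \<Longrightarrow> mulX X j f \<in> polyF X (Suc n)"
proof -
  assume "f \<in> polyF X n"
  then obtain S c where S: "finite S" "\<forall>m\<in>S. mdeg m \<le> n"
    and f: "f = (\<lambda>\<omega>. \<Sum>m\<in>S. c m * monomial_rv X m \<omega>)"
    unfolding polyF_def by blast
  have "mulX X j f = (\<lambda>\<omega>. \<Sum>m\<in>S. c m * monomial_rv X (m(j := Suc (m j))) \<omega>)"
    unfolding f mulX_def monomial_rv_bump by (simp add: sum_distrib_left mult.left_commute)
  also have "\<dots> \<in> polyF X (Suc n)"
    using S by (intro polyF_sum monomial_in_polyF) (auto simp: mdeg_bump)
  finally show ?thesis .
qed

lemma polyAll_iff: "f \<in> polyAll X \<longleftrightarrow> (\<exists>n. f \<in> polyF X n)"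
  unfolding polyAll_def by blast

lemma polyAll_add: "f \<in> polyAll X \<Longrightarrow> g \<in> polyAll X \<Longrightarrow> (\<lambda>\<omega>. f \<omega> + g \<omega>) \<in> polyAll X"
proof -
  assume "f \<in> polyAll X" "g \<in> polyAll X"
  then obtain n n' where "f \<in> polyF X n" "g \<in> polyF X n'"
    unfolding polyAll_iff by blast
  then have "f \<in> polyF X (max n n')" "g \<in> polyF X (max n n')"
    using polyF_mono[of n "max n n'" X] polyF_mono[of n' "max n n'" X] by auto
  then show ?thesis
    unfolding polyAll_iff using polyF_add by blast
qed

lemma polyAll_cmult: "f \<in> polyAll X \<Longrightarrow> (\<lambda>\<omega>. a * f \<omega>) \<in> polyAll X"
  unfolding polyAll_iff using polyF_cmult by blast

lemma polyAll_diff: "f \<in> polyAll X \<Longrightarrow> g \<in> polyAll X \<Longrightarrow> (\<lambda>\<omega>. f \<omega> - g \<omega>) \<in> polyAll X"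
  using polyAll_add[OF _ polyAll_cmult[of g X "-1"]] by simp

lemma const_in_polyAll: "(\<lambda>\<omega>. c) \<in> polyAll X"
  unfolding polyAll_iff using const_in_polyF by blast

lemma polyAll_sum:
  "finite K \<Longrightarrow> (\<And>k. k \<in> K \<Longrightarrow> \<phi> k \<in> polyAll X) \<Longrightarrow> (\<lambda>\<omega>. \<Sum>k\<in>K. \<phi> k \<omega>) \<in> polyAll X"
  by (induction K rule: finite_induct) (auto intro: polyAll_add const_in_polyAll)

lemma in_polyF_pdeg: "g \<in> polyAll X \<Longrightarrow> g \<in> polyF X (pdeg X g)"
  unfolding pdeg_def polyAll_iff by (rule LeastI_ex)

lemma mulX_in_polyAll: "f \<in> polyAll X \<Longrightarrow> mulX X j f \<in> polyAll X"
  unfolding polyAll_iff using mulX_in_polyF by blast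

lemma Re_Im_in_poly_rv:
  assumes "f \<in> polyAll X"
  shows "(\<lambda>\<omega>. Re (f \<omega>)) \<in> poly_rv X" "(\<lambda>\<omega>. Im (f \<omega>)) \<in> poly_rv X"
proof -
  obtain S c where S: "finite S" and f: "f = (\<lambda>\<omega>. \<Sum>m\<in>S. c m * monomial_rv X m \<omega>)"
    using assms unfolding polyAll_iff polyF_def by blast
  define p where "p m = (\<lambda>\<omega>. \<Prod>i\<in>UNIV. X i \<omega> ^ m i)" for m
  have p: "p m \<in> poly_rv X" for m
    unfolding p_def by (intro poly_rv_prod poly_rv_power poly_rv_var) auto
  have f_p: "f = (\<lambda>\<omega>. \<Sum>m\<in>S. c m * complex_of_real (p m \<omega>))"
    unfolding f monomial_rv_def p_def ..
  have "(\<lambda>\<omega>. Re (f \<omega>)) = (\<lambda>\<omega>. \<Sum>m\<in>S. Re (c m) * p m \<omega>)"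
    "(\<lambda>\<omega>. Im (f \<omega>)) = (\<lambda>\<omega>. \<Sum>m\<in>S. Im (c m) * p m \<omega>)"
    unfolding f_p by simp_all
  then show "(\<lambda>\<omega>. Re (f \<omega>)) \<in> poly_rv X" "(\<lambda>\<omega>. Im (f \<omega>)) \<in> poly_rv X"
    using poly_rv_sum[OF S poly_rv_cmult[OF p]] by simp_all
qed

lemma integrable_complex_of_Re_Im:
  fixes f :: "'a \<Rightarrow> complex"
  assumes "integrable M (\<lambda>\<omega>. Re (f \<omega>))" "integrable M (\<lambda>\<omega>. Im (f \<omega>))"
  shows "integrable M f"
proof -
  have "f = (\<lambda>\<omega>. complex_of_real (Re (f \<omega>)) + \<i> * complex_of_real (Im (f \<omega>)))"
    by (simp add: fun_eq_iff complex_eq_iff)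
  then show ?thesis
    using assms by (metis Bochner_Integration.integrable_add integrable_mult_right integrable_of_real)
qed

lemma sum_insert_residual:
  fixes f :: "'a \<Rightarrow> 'b::comm_ring"
  assumes "finite K" "k0 \<notin> K"
  shows "f \<omega> - (\<Sum>k\<in>insert k0 K. (if k = k0 then a else c1 k - a * c2 k) * \<phi> k \<omega>) =
    (f \<omega> - (\<Sum>k\<in>K. c1 k * \<phi> k \<omega>)) - a * (\<phi> k0 \<omega> - (\<Sum>k\<in>K. c2 k * \<phi> k \<omega>))"
proof -
  have "(\<Sum>k\<in>K. (if k = k0 then a else c1 k - a * c2 k) * \<phi> k \<omega>) =
      (\<Sum>k\<in>K. c1 k * \<phi> k \<omega> - a * (c2 k * \<phi> k \<omega>))"
    by (rule sum.cong) (use assms(2) in \<open>auto simp: algebra_simps\<close>)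
  then show ?thesis
    using assms by (simp add: sum_subtractf sum_distrib_left algebra_simps)
qed

context finite_moments
begin

lemma integrable_mult_cnj:
  assumes "f \<in> polyAll X" "g \<in> polyAll X"
  shows "integrable M (\<lambda>\<omega>. f \<omega> * cnj (g \<omega>))"
proof (rule integrable_complex_of_Re_Im)
  have Re_Im: "(\<lambda>\<omega>. Re (f \<omega>)) \<in> poly_rv X" "(\<lambda>\<omega>. Im (f \<omega>)) \<in> poly_rv X"
    "(\<lambda>\<omega>. Re (g \<omega>)) \<in> poly_rv X" "(\<lambda>\<omega>. Im (g \<omega>)) \<in> poly_rv X"
    using assms by (simp_all add: Re_Im_in_poly_rv)
  show "integrable M (\<lambda>\<omega>. Re (f \<omega> * cnj (g \<omega>)))"
    by (simp, intro integrable_poly_rv poly_rv_add poly_rv_mult Re_Im)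
  show "integrable M (\<lambda>\<omega>. Im (f \<omega> * cnj (g \<omega>)))"
    by (simp, intro integrable_poly_rv poly_rv_diff poly_rv_mult Re_Im)
qed

lemma integrable_polyAll: "f \<in> polyAll X \<Longrightarrow> integrable M f"
  using integrable_mult_cnj[OF _ const_in_polyAll[of 1]] by simp

lemma borel_measurable_polyAll: "f \<in> polyAll X \<Longrightarrow> f \<in> borel_measurable M"
  by (rule borel_measurable_integrable[OF integrable_polyAll])

lemma cinner_add_left:
  "f \<in> polyAll X \<Longrightarrow> g \<in> polyAll X \<Longrightarrow> h \<in> polyAll X \<Longrightarrow>
    cinner M (\<lambda>\<omega>. f \<omega> + g \<omega>) h = cinner M f h + cinner M g h"
  unfolding cinner_def by (simp add: distrib_right integrable_mult_cnj)

lemma cinner_diff_left: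
  "f \<in> polyAll X \<Longrightarrow> g \<in> polyAll X \<Longrightarrow> h \<in> polyAll X \<Longrightarrow>
    cinner M (\<lambda>\<omega>. f \<omega> - g \<omega>) h = cinner M f h - cinner M g h"
  unfolding cinner_def by (simp add: left_diff_distrib integrable_mult_cnj)

lemma cinner_cmult_left: "cinner M (\<lambda>\<omega>. a * f \<omega>) h = a * cinner M f h"
  unfolding cinner_def by (simp add: mult.assoc)

lemma cinner_commute: "cinner M g f = cnj (cinner M f g)"
proof -
  have "cnj (cinner M f g) = integral\<^sup>L M (\<lambda>\<omega>. cnj (f \<omega> * cnj (g \<omega>)))"
    unfolding cinner_def by (rule Bochner_Integration.integral_cnj[symmetric])
  then show ?thesis
    unfolding cinner_def by (simp add: mult.commute)
qed

lemma cinner_diff_right: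
  assumes "f \<in> polyAll X" "g \<in> polyAll X" "h \<in> polyAll X"
  shows "cinner M f (\<lambda>\<omega>. g \<omega> - h \<omega>) = cinner M f g - cinner M f h"
proof -
  have "cinner M f (\<lambda>\<omega>. g \<omega> - h \<omega>) = cnj (cinner M g f - cinner M h f)"
    using assms by (simp add: cinner_commute[of f] cinner_diff_left)
  also have "\<dots> = cinner M f g - cinner M f h"
    by (simp add: cinner_commute[of _ f])
  finally show ?thesis .
qed

lemma cinner_sum_right:
  assumes "finite K" "f \<in> polyAll X" "\<And>k. k \<in> K \<Longrightarrow> \<phi> k \<in> polyAll X"
  shows "cinner M f (\<lambda>\<omega>. \<Sum>k\<in>K. a k * \<phi> k \<omega>) = (\<Sum>k\<in>K. cnj (a k) * cinner M f (\<phi> k))"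
proof -
  have "(\<lambda>\<omega>. f \<omega> * cnj (\<Sum>k\<in>K. a k * \<phi> k \<omega>)) = (\<lambda>\<omega>. \<Sum>k\<in>K. cnj (a k) * (f \<omega> * cnj (\<phi> k \<omega>)))"
    by (simp add: sum_distrib_left algebra_simps)
  then have "cinner M f (\<lambda>\<omega>. \<Sum>k\<in>K. a k * \<phi> k \<omega>) =
      (\<Sum>k\<in>K. integral\<^sup>L M (\<lambda>\<omega>. cnj (a k) * (f \<omega> * cnj (\<phi> k \<omega>))))"
    unfolding cinner_def using assms by (simp add: integrable_mult_cnj)
  then show ?thesis
    unfolding cinner_def by simp
qed

lemma cinner_one_right: "cinner M f (\<lambda>\<omega>. 1) = integral\<^sup>L M f"
  unfolding cinner_def by simp

lemma cinner_eq_0_if_null: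
  assumes u: "u \<in> polyAll X" and h: "h \<in> polyAll X" and null: "cinner M u u = 0"
  shows "cinner M h u = 0"
proof -
  have int: "integrable M (\<lambda>\<omega>. (cmod (u \<omega>))\<^sup>2)"
    using integrable_Re[OF integrable_mult_cnj[OF u u]] by (simp add: complex_mult_cnj cmod_power2)
  have "(complex_of_real (cmod z))\<^sup>2 = z * cnj z" for z
    by (simp flip: complex_norm_square)
  then have "cinner M u u = complex_of_real (integral\<^sup>L M (\<lambda>\<omega>. (cmod (u \<omega>))\<^sup>2))"
    unfolding cinner_def by (simp flip: integral_complex_of_real)
  then have "AE \<omega> in M. (cmod (u \<omega>))\<^sup>2 = 0"
    using null integral_nonneg_eq_0_iff_AE[OF int] by simp
  then have "AE \<omega> in M. h \<omega> * cnj (u \<omega>) = 0"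
    by eventually_elim simp
  then show ?thesis
    unfolding cinner_def using integral_cong_AE[of "\<lambda>\<omega>. h \<omega> * cnj (u \<omega>)" M "\<lambda>_. 0"]
      integrable_mult_cnj[OF h u] by auto
qed

lemma cinner_eq_0_of_residual:
  assumes "finite K" "s \<in> polyAll X" "\<phi> j \<in> polyAll X" "\<And>k. k \<in> K \<Longrightarrow> \<phi> k \<in> polyAll X"
    and "\<And>k. k \<in> K \<Longrightarrow> cinner M s (\<phi> k) = 0"
    and "cinner M s (\<lambda>\<omega>. \<phi> j \<omega> - (\<Sum>k\<in>K. c k * \<phi> k \<omega>)) = 0"
  shows "cinner M s (\<phi> j) = 0"
proof -
  have "cinner M s (\<lambda>\<omega>. \<Sum>k\<in>K. c k * \<phi> k \<omega>) = 0"
    using assms by (simp add: cinner_sum_right)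
  moreover have "(\<lambda>\<omega>. \<Sum>k\<in>K. c k * \<phi> k \<omega>) \<in> polyAll X"
    using assms by (intro polyAll_sum polyAll_cmult) auto
  ultimately show ?thesis
    using assms cinner_diff_right by simp
qed

lemma exists_orthogonal_correction:
  assumes "u \<in> polyAll X" "h \<in> polyAll X"
  shows "\<exists>a. cinner M (\<lambda>\<omega>. h \<omega> - a * u \<omega>) u = 0"
proof (cases "cinner M u u = 0")
  case True
  then show ?thesis
    using cinner_eq_0_if_null[OF assms] by (intro exI[of _ 0]) simp
next
  case False
  define a where "a = cinner M h u / cinner M u u"
  have "cinner M (\<lambda>\<omega>. h \<omega> - a * u \<omega>) u = cinner M h u - a * cinner M u u"
    using assms by (simp add: cinner_diff_left polyAll_cmult cinner_cmult_left)
  also have "\<dots> = 0"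
    using False by (simp add: a_def)
  finally show ?thesis
    by blast
qed

lemma exists_orthogonal_residual:
  assumes "finite K" "\<And>k. k \<in> K \<Longrightarrow> \<phi> k \<in> polyAll X" "f \<in> polyAll X"
  shows "\<exists>c. \<forall>k\<in>K. cinner M (\<lambda>\<omega>. f \<omega> - (\<Sum>k'\<in>K. c k' * \<phi> k' \<omega>)) (\<phi> k) = 0"
  using assms
proof (induction K arbitrary: f rule: finite_induct)
  case empty
  then show ?case
    by simp
next
  case (insert k0 K)
  have \<phi>K: "\<And>k. k \<in> K \<Longrightarrow> \<phi> k \<in> polyAll X" and \<phi>0: "\<phi> k0 \<in> polyAll X"
    using insert.prems by auto
  obtain c1 where c1: "\<forall>k\<in>K. cinner M (\<lambda>\<omega>. f \<omega> - (\<Sum>k'\<in>K. c1 k' * \<phi> k' \<omega>)) (\<phi> k) = 0"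
    using insert.IH[OF \<phi>K insert.prems(2)] by blast
  obtain c2 where c2: "\<forall>k\<in>K. cinner M (\<lambda>\<omega>. \<phi> k0 \<omega> - (\<Sum>k'\<in>K. c2 k' * \<phi> k' \<omega>)) (\<phi> k) = 0"
    using insert.IH[OF \<phi>K \<phi>0] by blast
  define r where "r = (\<lambda>\<omega>. f \<omega> - (\<Sum>k\<in>K. c1 k * \<phi> k \<omega>))"
  define u where "u = (\<lambda>\<omega>. \<phi> k0 \<omega> - (\<Sum>k\<in>K. c2 k * \<phi> k \<omega>))"
  have r: "r \<in> polyAll X" and u: "u \<in> polyAll X"
    unfolding r_def u_def using insert.hyps(1) \<phi>K \<phi>0 insert.prems(2)
    by (intro polyAll_diff polyAll_sum polyAll_cmult; simp)+
  obtain a where a: "cinner M (\<lambda>\<omega>. r \<omega> - a * u \<omega>) u = 0"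
    using exists_orthogonal_correction[OF u r] by blast
  define s where "s = (\<lambda>\<omega>. r \<omega> - a * u \<omega>)"
  have s: "s \<in> polyAll X"
    unfolding s_def by (rule polyAll_diff[OF r polyAll_cmult[OF u]])
  have orth_K: "cinner M s (\<phi> k) = 0" if "k \<in> K" for k
  proof -
    have "cinner M s (\<phi> k) = cinner M r (\<phi> k) - a * cinner M u (\<phi> k)"
      unfolding s_def using r u \<phi>K[OF that]
      by (simp add: cinner_diff_left polyAll_cmult cinner_cmult_left)
    then show ?thesis
      using c1 c2 that unfolding r_def u_def by simp
  qed
  have "cinner M s (\<lambda>\<omega>. \<phi> k0 \<omega> - (\<Sum>k\<in>K. c2 k * \<phi> k \<omega>)) = 0"
    using a unfolding s_def u_def .
  then have orth_k0: "cinner M s (\<phi> k0) = 0"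
    using cinner_eq_0_of_residual[of K s \<phi> k0 c2] insert.hyps(1) s \<phi>0 \<phi>K orth_K by blast
  define c where "c k = (if k = k0 then a else c1 k - a * c2 k)" for k
  have residual: "(\<lambda>\<omega>. f \<omega> - (\<Sum>k\<in>insert k0 K. c k * \<phi> k \<omega>)) = s"
    unfolding c_def s_def r_def u_def by (rule ext) (simp only: sum_insert_residual[OF insert.hyps])
  show ?case
    using orth_K orth_k0 by (intro exI[of _ c]) (simp add: residual)
qed

lemma exists_projection_polyF:
  assumes f: "f \<in> polyAll X"
  shows "\<exists>g\<in>polyF X n. \<forall>h\<in>polyF X n. cinner M (\<lambda>\<omega>. f \<omega> - g \<omega>) h = 0"
proof -
  have mono: "monomial_rv X m \<in> polyAll X" if "m \<in> monomials_le n" for m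
    using that monomial_in_polyF[of m n X] unfolding monomials_le_def polyAll_iff by blast
  obtain c where c: "\<forall>m\<in>monomials_le n. cinner M (\<lambda>\<omega>. f \<omega> - poly_of_coeffs X n c \<omega>) (monomial_rv X m) = 0"
    using exists_orthogonal_residual[where \<phi>="monomial_rv X", OF finite_monomials_le mono f] unfolding poly_of_coeffs_def by blast
  have g: "poly_of_coeffs X n c \<in> polyF X n"
    unfolding polyF_eq_range by blast
  have residual: "(\<lambda>\<omega>. f \<omega> - poly_of_coeffs X n c \<omega>) \<in> polyAll X"
    using g f polyAll_diff polyAll_iff by blast
  have "cinner M (\<lambda>\<omega>. f \<omega> - poly_of_coeffs X n c \<omega>) h = 0" if h: "h \<in> polyF X n" for h
  proof -
    obtain c' where "h = poly_of_coeffs X n c'"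
      using h unfolding polyF_eq_range by blast
    then show ?thesis
      using cinner_sum_right[OF finite_monomials_le residual mono, where a=c'] c
      by (simp add: poly_of_coeffs_def)
  qed
  then show ?thesis
    using g by blast
qed

lemma exists_projection_Gsp:
  assumes f: "f \<in> polyAll X"
  shows "\<exists>g. g \<in> Gsp M X n \<and> (\<forall>h\<in>Gsp M X n. cinner M (\<lambda>\<omega>. f \<omega> - g \<omega>) h = 0)"
proof (cases "n = 0")
  case True
  then show ?thesis
    using exists_projection_polyF[OF f, of 0] by (auto simp: Gsp_def)
next
  case False
  obtain q where q: "q \<in> polyF X n" "\<forall>h\<in>polyF X n. cinner M (\<lambda>\<omega>. f \<omega> - q \<omega>) h = 0"
    using exists_projection_polyF[OF f] by blast
  then have q': "q \<in> polyAll X"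
    using polyAll_iff by blast
  obtain q0 where q0: "q0 \<in> polyF X (n - 1)" "\<forall>h\<in>polyF X (n - 1). cinner M (\<lambda>\<omega>. q \<omega> - q0 \<omega>) h = 0"
    using exists_projection_polyF[OF q'] by blast
  have q0': "q0 \<in> polyF X n" "q0 \<in> polyAll X"
    using q0(1) polyF_mono[of "n - 1" n X] polyAll_iff by auto
  define g where "g \<omega> = q \<omega> - q0 \<omega>" for \<omega>
  have "g \<in> Gsp M X n"
    using False q0(2) polyF_diff[OF q(1) q0'(1)] unfolding Gsp_def g_def by auto
  moreover have "cinner M (\<lambda>\<omega>. f \<omega> - g \<omega>) h = 0" if h: "h \<in> Gsp M X n" for h
  proof -
    have h_poly: "h \<in> polyF X n" "h \<in> polyAll X" and h_orth: "cinner M h q0 = 0"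
      using h False q0(1) unfolding Gsp_def polyAll_iff by auto
    have "(\<lambda>\<omega>. f \<omega> - g \<omega>) = (\<lambda>\<omega>. (f \<omega> - q \<omega>) + q0 \<omega>)"
      by (simp add: g_def fun_eq_iff)
    then have "cinner M (\<lambda>\<omega>. f \<omega> - g \<omega>) h = cinner M (\<lambda>\<omega>. f \<omega> - q \<omega>) h + cinner M q0 h"
      using cinner_add_left[OF polyAll_diff[OF f q'] q0'(2) h_poly(2)] by simp
    also have "\<dots> = 0"
      using q(2) h_poly(1) h_orth cinner_commute[of q0 h] by simp
    finally show ?thesis .
  qed
  ultimately show ?thesis
    by blast
qed

lemma projG_in_Gsp: "f \<in> polyAll X \<Longrightarrow> projG M X n f \<in> Gsp M X n"
  and projG_orthogonal:
    "f \<in> polyAll X \<Longrightarrow> h \<in> Gsp M X n \<Longrightarrow> cinner M (\<lambda>\<omega>. f \<omega> - projG M X n f \<omega>) h = 0"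
  using someI_ex[OF exists_projection_Gsp] unfolding projG_def by blast+

lemma projG_in_polyAll: "f \<in> polyAll X \<Longrightarrow> projG M X n f \<in> polyAll X"
  using projG_in_Gsp unfolding Gsp_def polyAll_iff by (metis (no_types, lifting) mem_Collect_eq)

lemma projG_0_const: "f \<in> polyAll X \<Longrightarrow> \<exists>c. projG M X 0 f = (\<lambda>\<omega>. c)"
  using projG_in_Gsp[of f 0] by (simp add: Gsp_def polyF_0_iff)

lemma integral_projG_pos: "f \<in> polyAll X \<Longrightarrow> 1 \<le> n \<Longrightarrow> integral\<^sup>L M (projG M X n f) = 0"
  using projG_in_Gsp[of f n] const_in_polyF[of 1 X "n - 1"] by (auto simp: Gsp_def cinner_one_right)

lemma integral_projG_0: "f \<in> polyAll X \<Longrightarrow> integral\<^sup>L M (projG M X 0 f) = integral\<^sup>L M f"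
  using projG_orthogonal[of f "\<lambda>\<omega>. 1" 0] const_in_polyF[of 1 X 0]
    integrable_polyAll[of f] integrable_polyAll[OF projG_in_polyAll, of f 0]
  by (simp add: Gsp_def cinner_one_right)

end

section \<open>The expectation of U_i\<close>

locale centered_moments = finite_moments +
  assumes X_mean_zero: "\<And>k. integral\<^sup>L M (X k) = 0"
begin

lemma of_real_X_in_polyAll: "(\<lambda>\<omega>. complex_of_real (X i \<omega>)) \<in> polyAll X"
  using of_real_X_in_polyF polyAll_iff by blast

lemma integral_mulX_const: "integral\<^sup>L M (mulX X i (\<lambda>\<omega>. c)) = 0"
  using X_mean_zero[of i] by (simp add: mulX_def)

lemma of_real_X_in_Gsp_1: "(\<lambda>\<omega>. complex_of_real (X i \<omega>)) \<in> Gsp M X 1"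
proof -
  have "cinner M (\<lambda>\<omega>. complex_of_real (X i \<omega>)) (\<lambda>\<omega>. c) = 0" for c
    using integral_mulX_const[of i "cnj c"] by (simp add: cinner_def mulX_def)
  then show ?thesis
    unfolding Gsp_def using of_real_X_in_polyF by (auto simp: polyF_0_iff)
qed

lemma a_minus_summand_in_polyAll:
  "g \<in> polyAll X \<Longrightarrow>
    (\<lambda>\<omega>. if n = 0 then 0 else projG M X (n - 1) (mulX X i (projG M X n g)) \<omega>) \<in> polyAll X"
  by (cases "n = 0") (simp_all add: const_in_polyAll projG_in_polyAll mulX_in_polyAll)

lemma a_minus_in_polyAll: "g \<in> polyAll X \<Longrightarrow> a_minus M X i g \<in> polyAll X"
  unfolding a_minus_def by (intro polyAll_sum a_minus_summand_in_polyAll) auto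

lemma a_zero_in_polyAll: "g \<in> polyAll X \<Longrightarrow> a_zero M X i g \<in> polyAll X"
  unfolding a_zero_def by (intro polyAll_sum) (auto intro: projG_in_polyAll mulX_in_polyAll)

lemma Uop_in_polyAll: "g \<in> polyAll X \<Longrightarrow> Uop M X i g \<in> polyAll X"
  using polyAll_add[OF a_minus_in_polyAll polyAll_cmult[OF a_zero_in_polyAll, where a="1 / 2"]]
  unfolding Uop_def by simp

lemma integral_a_zero:
  assumes g: "g \<in> polyAll X"
  shows "integral\<^sup>L M (a_zero M X i g) = 0"
proof -
  define h where "h n = mulX X i (projG M X n g)" for n
  have h: "h n \<in> polyAll X" for n
    unfolding h_def by (intro mulX_in_polyAll projG_in_polyAll g)
  have "integral\<^sup>L M (a_zero M X i g) = (\<Sum>n\<le>pdeg X g. integral\<^sup>L M (projG M X n (h n)))"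
    unfolding a_zero_def h_def[symmetric]
    by (rule Bochner_Integration.integral_sum) (intro integrable_polyAll projG_in_polyAll h)
  also have "\<dots> = (\<Sum>n\<le>pdeg X g. if n = 0 then integral\<^sup>L M (h 0) else 0)"
    by (rule sum.cong) (auto simp: integral_projG_0 integral_projG_pos h)
  also have "\<dots> = integral\<^sup>L M (h 0)"
    by simp
  also have "\<dots> = 0"
    using projG_0_const[OF g] integral_mulX_const unfolding h_def by auto
  finally show ?thesis .
qed

lemma integral_a_minus:
  assumes g: "g \<in> polyAll X"
  shows "integral\<^sup>L M (a_minus M X i g) = integral\<^sup>L M (mulX X i g)"
proof -
  define h where "h n = mulX X i (projG M X n g)" for n
  have h: "h n \<in> polyAll X" for n
    unfolding h_def by (intro mulX_in_polyAll projG_in_polyAll g)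
  have "integral\<^sup>L M (a_minus M X i g) =
      (\<Sum>n\<le>pdeg X g. integral\<^sup>L M (\<lambda>\<omega>. if n = 0 then 0 else projG M X (n - 1) (h n) \<omega>))"
    unfolding a_minus_def h_def
    by (rule Bochner_Integration.integral_sum) (intro integrable_polyAll a_minus_summand_in_polyAll g)
  \<comment> \<open>Projections onto \<open>G\<^sub>k\<close> with \<open>k \<ge> 1\<close> have mean zero, so only \<open>n = 1\<close> survives.\<close>
  also have "\<dots> = (\<Sum>n\<le>pdeg X g. if n = 1 then integral\<^sup>L M (h 1) else 0)"
  proof (rule sum.cong)
    fix n
    show "integral\<^sup>L M (\<lambda>\<omega>. if n = 0 then 0 else projG M X (n - 1) (h n) \<omega>) =
        (if n = 1 then integral\<^sup>L M (h 1) else 0)"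
      by (cases "n = 0"; cases "n = 1") (simp_all add: integral_projG_0 integral_projG_pos h)
  qed simp
  also have "\<dots> = integral\<^sup>L M (mulX X i g)"
  proof (cases "pdeg X g = 0")
    case True
    then obtain c where "g = (\<lambda>\<omega>. c)"
      using in_polyF_pdeg[OF g] polyF_0_iff by metis
    then show ?thesis
      using True integral_mulX_const by simp
  next
    case False
    have "cinner M (\<lambda>\<omega>. g \<omega> - projG M X 1 g \<omega>) (\<lambda>\<omega>. complex_of_real (X i \<omega>)) = 0"
      by (rule projG_orthogonal[OF g of_real_X_in_Gsp_1])
    then have "cinner M g (\<lambda>\<omega>. complex_of_real (X i \<omega>)) =
        cinner M (projG M X 1 g) (\<lambda>\<omega>. complex_of_real (X i \<omega>))"
      using cinner_diff_left[OF g projG_in_polyAll[OF g] of_real_X_in_polyAll] by simp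
    then have "integral\<^sup>L M (mulX X i g) = integral\<^sup>L M (h 1)"
      unfolding cinner_def h_def mulX_def by (simp add: mult.commute)
    then show ?thesis
      using False by simp
  qed
  finally show ?thesis .
qed

lemma integral_Uop: "g \<in> polyAll X \<Longrightarrow> integral\<^sup>L M (Uop M X i g) = integral\<^sup>L M (mulX X i g)"
  unfolding Uop_def
  by (simp add: integrable_polyAll a_minus_in_polyAll a_zero_in_polyAll integral_a_minus integral_a_zero)

lemma Uop_one: "Uop M X i (\<lambda>\<omega>. 1) = (\<lambda>\<omega>. 0)"
proof -
  have one: "(\<lambda>\<omega>. 1) \<in> polyAll X"
    by (rule const_in_polyAll)
  have "pdeg X (\<lambda>\<omega>. 1) = 0"
    unfolding pdeg_def by (rule Least_eq_0) (rule const_in_polyF)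
  moreover obtain c where c: "projG M X 0 (\<lambda>\<omega>. 1) = (\<lambda>\<omega>. c)"
    using projG_0_const[OF one] by blast
  moreover have "c = 1"
    using integral_projG_0[OF one] by (simp add: c prob_space)
  moreover obtain c' where c': "projG M X 0 (\<lambda>\<omega>. complex_of_real (X i \<omega>)) = (\<lambda>\<omega>. c')"
    using projG_0_const[OF of_real_X_in_polyAll] by blast
  moreover have "c' = 0"
    using integral_projG_0[OF of_real_X_in_polyAll, of i] X_mean_zero[of i] by (simp add: c' prob_space)
  ultimately show ?thesis
    by (simp add: Uop_def a_minus_def a_zero_def mulX_def)
qed

end

section \<open>The commutation relation on monomials\<close>

definition word_prod :: "('d \<Rightarrow> 'a \<Rightarrow> real) \<Rightarrow> 'd list \<Rightarrow> 'a \<Rightarrow> real" where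
  "word_prod X ws \<omega> = (\<Prod>w\<leftarrow>ws. X w \<omega>)"

definition commutator_rv ::
    "('d::finite \<Rightarrow> 'a \<Rightarrow> real) \<Rightarrow> ('d \<Rightarrow> 'd \<Rightarrow> 'd \<Rightarrow> real) \<Rightarrow> ('d \<Rightarrow> 'd \<Rightarrow> real) \<Rightarrow>
      'd \<Rightarrow> 'd \<Rightarrow> 'a \<Rightarrow> real" where
  "commutator_rv X \<alpha> \<beta> i j \<omega> = (\<Sum>k\<in>UNIV. \<alpha> i j k * X k \<omega>) + \<beta> i j"

text \<open>\<open>U_word X \<alpha> \<beta> i ws\<close> is \<open>U\<^sub>i\<close> applied to \<open>word_prod X ws\<close>, as forced by
  \<open>U\<^sub>i 1 = 0\<close> and the commutation relation.\<close>

fun U_word ::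
    "('d::finite \<Rightarrow> 'a \<Rightarrow> real) \<Rightarrow> ('d \<Rightarrow> 'd \<Rightarrow> 'd \<Rightarrow> real) \<Rightarrow> ('d \<Rightarrow> 'd \<Rightarrow> real) \<Rightarrow>
      'd \<Rightarrow> 'd list \<Rightarrow> 'a \<Rightarrow> real" where
  "U_word X \<alpha> \<beta> i [] \<omega> = 0"
| "U_word X \<alpha> \<beta> i (j # ws) \<omega> =
    X j \<omega> * U_word X \<alpha> \<beta> i ws \<omega> + commutator_rv X \<alpha> \<beta> i j \<omega> * word_prod X ws \<omega>"

lemma word_prod_Nil [simp]: "word_prod X [] \<omega> = 1"
  and word_prod_Cons [simp]: "word_prod X (j # ws) \<omega> = X j \<omega> * word_prod X ws \<omega>"
  by (simp_all add: word_prod_def)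

lemma word_prod_in_poly_rv: "word_prod X ws \<in> poly_rv X"
proof (induction ws)
  case Nil
  then show ?case
    using poly_rv_const[of 1 X] by (simp add: fun_eq_iff)
next
  case (Cons j ws)
  then show ?case
    using poly_rv_mult[OF poly_rv_var[of X j] Cons.IH] by (simp add: fun_eq_iff)
qed

lemma commutator_rv_in_poly_rv: "commutator_rv X \<alpha> \<beta> i j \<in> poly_rv X"
  unfolding commutator_rv_def[abs_def]
  by (intro poly_rv_add poly_rv_sum poly_rv_cmult poly_rv_var poly_rv_const) auto

lemma U_word_in_poly_rv: "U_word X \<alpha> \<beta> i ws \<in> poly_rv X"
proof (induction ws)
  case Nil
  then show ?case
    using poly_rv_const[of 0 X] by (simp add: fun_eq_iff)
next
  case (Cons j ws)
  have "(\<lambda>\<omega>. X j \<omega> * U_word X \<alpha> \<beta> i ws \<omega> + commutator_rv X \<alpha> \<beta> i j \<omega> * word_prod X ws \<omega>) \<in> poly_rv X"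
    by (intro poly_rv_add poly_rv_mult poly_rv_var Cons.IH commutator_rv_in_poly_rv word_prod_in_poly_rv)
  then show ?case
    by (simp add: fun_eq_iff)
qed

locale meixner = centered_moments +
  fixes \<alpha> :: "'d::finite \<Rightarrow> 'd \<Rightarrow> 'd \<Rightarrow> real" and \<beta> :: "'d \<Rightarrow> 'd \<Rightarrow> real"
  assumes meixner: "meixner1 M X \<alpha> \<beta>"
    and X_cov: "\<And>i j. integral\<^sup>L M (\<lambda>\<omega>. X i \<omega> * X j \<omega>) = (if i = j then 1 else 0)"
begin

lemma of_real_word_prod_in_polyAll: "(\<lambda>\<omega>. complex_of_real (word_prod X ws \<omega>)) \<in> polyAll X"
proof (induction ws)
  case Nil
  then show ?case
    using const_in_polyAll[of 1 X] by simp
next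
  case (Cons j ws)
  then show ?case
    using mulX_in_polyAll[OF Cons.IH, of j] by (simp add: mulX_def)
qed

lemma Uop_word_prod:
  "AE \<omega> in M. Uop M X i (\<lambda>\<omega>. complex_of_real (word_prod X ws \<omega>)) \<omega> =
    complex_of_real (U_word X \<alpha> \<beta> i ws \<omega>)"
proof (induction ws)
  case Nil
  then show ?case
    using Uop_one by simp
next
  case (Cons j ws)
  let ?f = "\<lambda>\<omega>. complex_of_real (word_prod X ws \<omega>)"
  have f_Cons: "(\<lambda>\<omega>. complex_of_real (word_prod X (j # ws) \<omega>)) = mulX X j ?f"
    by (simp add: mulX_def fun_eq_iff)
  have "AE \<omega> in M. Uop M X i (mulX X j ?f) \<omega> - mulX X j (Uop M X i ?f) \<omega> =
      (\<Sum>k\<in>UNIV. complex_of_real (\<alpha> i j k) * mulX X k ?f \<omega>) + complex_of_real (\<beta> i j) * ?f \<omega>"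
    using meixner of_real_word_prod_in_polyAll unfolding meixner1_def by blast
  from this Cons.IH show ?case
  proof eventually_elim
    case (elim \<omega>)
    then show ?case
      unfolding f_Cons
      by (simp add: mulX_def commutator_rv_def sum_distrib_left sum_distrib_right algebra_simps)
  qed
qed

lemma integral_X_mult_word_prod:
  "integral\<^sup>L M (\<lambda>\<omega>. X i \<omega> * word_prod X ws \<omega>) = integral\<^sup>L M (U_word X \<alpha> \<beta> i ws)"
proof -
  have "complex_of_real (integral\<^sup>L M (\<lambda>\<omega>. X i \<omega> * word_prod X ws \<omega>)) =
      integral\<^sup>L M (mulX X i (\<lambda>\<omega>. complex_of_real (word_prod X ws \<omega>)))"
    by (simp only: mulX_def of_real_mult[symmetric] integral_complex_of_real)
  also have "\<dots> = integral\<^sup>L M (Uop M X i (\<lambda>\<omega>. complex_of_real (word_prod X ws \<omega>)))"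
    by (rule integral_Uop[OF of_real_word_prod_in_polyAll, symmetric])
  also have "\<dots> = integral\<^sup>L M (\<lambda>\<omega>. complex_of_real (U_word X \<alpha> \<beta> i ws \<omega>))"
    using borel_measurable_polyAll[OF Uop_in_polyAll[OF of_real_word_prod_in_polyAll]]
      borel_measurable_poly_rv[OF U_word_in_poly_rv]
    by (intro integral_cong_AE Uop_word_prod) auto
  finally show ?thesis
    by simp
qed

lemma beta_eq_delta: "\<beta> i j = (if i = j then 1 else 0)"
proof -
  have "U_word X \<alpha> \<beta> i [j] = commutator_rv X \<alpha> \<beta> i j"
    by (simp add: fun_eq_iff)
  then have "integral\<^sup>L M (\<lambda>\<omega>. X i \<omega> * X j \<omega>) = integral\<^sup>L M (commutator_rv X \<alpha> \<beta> i j)"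
    using integral_X_mult_word_prod[of i "[j]"] by simp
  also have "\<dots> = (\<Sum>k\<in>UNIV. \<alpha> i j k * integral\<^sup>L M (X k)) + \<beta> i j"
    unfolding commutator_rv_def[abs_def]
    using integrable_poly_rv[OF poly_rv_var] by (simp add: prob_space)
  also have "\<dots> = \<beta> i j"
    by (simp add: X_mean_zero)
  finally show ?thesis
    using X_cov[of i j] by simp
qed

end

section \<open>Moments of linear combinations\<close>

fun sum_words :: "nat \<Rightarrow> ('d::finite list \<Rightarrow> 'b::comm_monoid_add) \<Rightarrow> 'b" where
  "sum_words 0 F = F []"
| "sum_words (Suc n) F = (\<Sum>j\<in>UNIV. sum_words n (\<lambda>ws. F (j # ws)))"

lemma sum_words_cmult: "sum_words n (\<lambda>ws. c * F ws) = (c :: 'b::semiring_0) * sum_words n F"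
  by (induction n arbitrary: F) (simp_all add: sum_distrib_left)

lemma sum_words_add: "sum_words n (\<lambda>ws. F ws + G ws) = sum_words n F + sum_words n G"
  by (induction n arbitrary: F G) (simp_all add: sum.distrib)

lemma sum_words_prod_list:
  "sum_words n (\<lambda>ws. \<Prod>w\<leftarrow>ws. a w) = (\<Sum>j\<in>UNIV. a j :: 'b::comm_semiring_1) ^ n"
  by (induction n) (simp_all add: sum_words_cmult sum_distrib_right)

lemma integral_sum_words:
  fixes F :: "'d::finite list \<Rightarrow> 'a \<Rightarrow> real"
  assumes "\<And>ws. integrable M (F ws)"
  shows "integrable M (\<lambda>\<omega>. sum_words n (\<lambda>ws. F ws \<omega>))"
    and "integral\<^sup>L M (\<lambda>\<omega>. sum_words n (\<lambda>ws. F ws \<omega>)) = sum_words n (\<lambda>ws. integral\<^sup>L M (F ws))"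
  using assms by (induction n arbitrary: F) auto

definition lincomb :: "('d::finite \<Rightarrow> 'a \<Rightarrow> real) \<Rightarrow> real^'d \<Rightarrow> 'a \<Rightarrow> real" where
  "lincomb X t \<omega> = (\<Sum>k\<in>UNIV. t $ k * X k \<omega>)"

definition l1_norm :: "real^'d::finite \<Rightarrow> real" where
  "l1_norm t = (\<Sum>k\<in>UNIV. \<bar>t $ k\<bar>)"

lemma l1_norm_nonneg: "0 \<le> l1_norm t"
  unfolding l1_norm_def by (simp add: sum_nonneg)

lemma abs_sum_le_l1_norm:
  assumes "\<And>k. \<bar>z k\<bar> \<le> B"
  shows "\<bar>\<Sum>k\<in>UNIV. t $ k * z k\<bar> \<le> l1_norm t * B"
proof -
  have "\<bar>\<Sum>k\<in>UNIV. t $ k * z k\<bar> \<le> (\<Sum>k\<in>UNIV. \<bar>t $ k\<bar> * B)"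
    using assms by (intro order_trans[OF sum_abs] sum_mono) (simp add: abs_mult mult_left_mono)
  then show ?thesis
    by (simp add: l1_norm_def sum_distrib_right)
qed

lemma lincomb_in_poly_rv: "lincomb X t \<in> poly_rv X"
  unfolding lincomb_def[abs_def] by (intro poly_rv_sum poly_rv_cmult poly_rv_var) auto

lemma lincomb_power_eq_sum_words:
  "lincomb X t \<omega> ^ n = sum_words n (\<lambda>ws. (\<Prod>w\<leftarrow>ws. t $ w) * word_prod X ws \<omega>)"
proof -
  have "(\<Prod>w\<leftarrow>ws. t $ w * X w \<omega>) = (\<Prod>w\<leftarrow>ws. t $ w) * word_prod X ws \<omega>" for ws
    by (induction ws) (simp_all add: ac_simps)
  then show ?thesis
    using sum_words_prod_list[of n "\<lambda>j. t $ j * X j \<omega>"] by (simp add: lincomb_def)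
qed

lemma sum_words_U_word:
  "sum_words n (\<lambda>ws. (\<Prod>w\<leftarrow>ws. t $ w) * U_word X \<alpha> \<beta> i ws \<omega>) =
    real n * lincomb X t \<omega> ^ (n - 1) * (\<Sum>j\<in>UNIV. t $ j * commutator_rv X \<alpha> \<beta> i j \<omega>)"
proof (induction n)
  case 0
  then show ?case
    by simp
next
  case (Suc n)
  let ?L = "\<Sum>j\<in>UNIV. t $ j * commutator_rv X \<alpha> \<beta> i j \<omega>"
  have "sum_words (Suc n) (\<lambda>ws. (\<Prod>w\<leftarrow>ws. t $ w) * U_word X \<alpha> \<beta> i ws \<omega>) =
      (\<Sum>j\<in>UNIV. sum_words n (\<lambda>ws. (t $ j * X j \<omega>) * ((\<Prod>w\<leftarrow>ws. t $ w) * U_word X \<alpha> \<beta> i ws \<omega>)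
        + (t $ j * commutator_rv X \<alpha> \<beta> i j \<omega>) * ((\<Prod>w\<leftarrow>ws. t $ w) * word_prod X ws \<omega>)))"
    by (simp add: algebra_simps)
  also have "\<dots> = (\<Sum>j\<in>UNIV. (t $ j * X j \<omega>) * (real n * lincomb X t \<omega> ^ (n - 1) * ?L)
      + (t $ j * commutator_rv X \<alpha> \<beta> i j \<omega>) * lincomb X t \<omega> ^ n)"
    by (simp only: sum_words_add sum_words_cmult Suc.IH lincomb_power_eq_sum_words)
  also have "\<dots> = (\<Sum>j\<in>UNIV. t $ j * X j \<omega>) * (real n * lincomb X t \<omega> ^ (n - 1) * ?L)
      + ?L * lincomb X t \<omega> ^ n"
    by (simp only: sum.distrib sum_distrib_right)
  also have "(\<Sum>j\<in>UNIV. t $ j * X j \<omega>) = lincomb X t \<omega>"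
    by (simp add: lincomb_def)
  also have "lincomb X t \<omega> * (real n * lincomb X t \<omega> ^ (n - 1) * ?L) = real n * lincomb X t \<omega> ^ n * ?L"
    by (cases n) simp_all
  finally show ?case
    by (simp add: algebra_simps)
qed

context meixner
begin

lemma integral_X_mult_lincomb_power:
  "integral\<^sup>L M (\<lambda>\<omega>. X i \<omega> * lincomb X t \<omega> ^ n) =
    real n * integral\<^sup>L M (\<lambda>\<omega>. lincomb X t \<omega> ^ (n - 1) * (\<Sum>j\<in>UNIV. t $ j * commutator_rv X \<alpha> \<beta> i j \<omega>))"
proof -
  have int_X_word: "integrable M (\<lambda>\<omega>. (\<Prod>w\<leftarrow>ws. t $ w) * (X i \<omega> * word_prod X ws \<omega>))" for ws
    by (intro integrable_poly_rv poly_rv_cmult poly_rv_mult poly_rv_var word_prod_in_poly_rv)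
  have int_U_word: "integrable M (\<lambda>\<omega>. (\<Prod>w\<leftarrow>ws. t $ w) * U_word X \<alpha> \<beta> i ws \<omega>)" for ws
    by (intro integrable_poly_rv poly_rv_cmult U_word_in_poly_rv)
  have "integral\<^sup>L M (\<lambda>\<omega>. X i \<omega> * lincomb X t \<omega> ^ n) =
      integral\<^sup>L M (\<lambda>\<omega>. sum_words n (\<lambda>ws. (\<Prod>w\<leftarrow>ws. t $ w) * (X i \<omega> * word_prod X ws \<omega>)))"
    by (simp add: lincomb_power_eq_sum_words sum_words_cmult[symmetric] mult.left_commute)
  also have "\<dots> = sum_words n (\<lambda>ws. (\<Prod>w\<leftarrow>ws. t $ w) * integral\<^sup>L M (U_word X \<alpha> \<beta> i ws))"
    by (simp add: integral_sum_words(2)[OF int_X_word] integral_X_mult_word_prod)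
  also have "\<dots> = integral\<^sup>L M (\<lambda>\<omega>. sum_words n (\<lambda>ws. (\<Prod>w\<leftarrow>ws. t $ w) * U_word X \<alpha> \<beta> i ws \<omega>))"
    by (simp add: integral_sum_words(2)[OF int_U_word])
  finally show ?thesis
    by (simp add: sum_words_U_word mult.assoc)
qed

lemma integrable_X_mult_lincomb_power: "integrable M (\<lambda>\<omega>. X i \<omega> * lincomb X t \<omega> ^ n)"
  by (intro integrable_poly_rv poly_rv_mult poly_rv_var poly_rv_power lincomb_in_poly_rv)

lemma integrable_lincomb_power: "integrable M (\<lambda>\<omega>. lincomb X t \<omega> ^ n)"
  by (intro integrable_poly_rv poly_rv_power lincomb_in_poly_rv)

lemma X_moment_recursion:
  "integral\<^sup>L M (\<lambda>\<omega>. X i \<omega> * lincomb X t \<omega> ^ Suc n) =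
    real (Suc n) * ((\<Sum>j\<in>UNIV. \<Sum>k\<in>UNIV. \<alpha> i j k * t $ j * integral\<^sup>L M (\<lambda>\<omega>. X k \<omega> * lincomb X t \<omega> ^ n))
      + t $ i * integral\<^sup>L M (\<lambda>\<omega>. lincomb X t \<omega> ^ n))"
proof -
  have "(\<Sum>j\<in>UNIV. t $ j * commutator_rv X \<alpha> \<beta> i j \<omega>) =
      (\<Sum>j\<in>UNIV. \<Sum>k\<in>UNIV. \<alpha> i j k * t $ j * X k \<omega>) + (\<Sum>j\<in>UNIV. t $ j * \<beta> i j)" for \<omega>
    by (simp add: commutator_rv_def distrib_left sum.distrib sum_distrib_left mult_ac)
  moreover have "(\<Sum>j\<in>UNIV. t $ j * \<beta> i j) = t $ i"
    by (simp add: beta_eq_delta if_distrib cong: if_cong)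
  ultimately have "(\<Sum>j\<in>UNIV. t $ j * commutator_rv X \<alpha> \<beta> i j \<omega>) =
      (\<Sum>j\<in>UNIV. \<Sum>k\<in>UNIV. \<alpha> i j k * t $ j * X k \<omega>) + t $ i" for \<omega>
    by simp
  then have "integral\<^sup>L M (\<lambda>\<omega>. X i \<omega> * lincomb X t \<omega> ^ Suc n) =
      real (Suc n) * integral\<^sup>L M (\<lambda>\<omega>. (\<Sum>j\<in>UNIV. \<Sum>k\<in>UNIV. \<alpha> i j k * t $ j * (X k \<omega> * lincomb X t \<omega> ^ n))
        + t $ i * lincomb X t \<omega> ^ n)"
    unfolding integral_X_mult_lincomb_power
    by (simp add: distrib_left sum_distrib_left sum_distrib_right mult_ac)
  then show ?thesis
    using integrable_X_mult_lincomb_power integrable_lincomb_power by simp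
qed

lemma moment_recursion:
  "integral\<^sup>L M (\<lambda>\<omega>. lincomb X t \<omega> ^ Suc n) =
    (\<Sum>k\<in>UNIV. t $ k * integral\<^sup>L M (\<lambda>\<omega>. X k \<omega> * lincomb X t \<omega> ^ n))"
proof -
  have "(\<lambda>\<omega>. lincomb X t \<omega> ^ Suc n) = (\<lambda>\<omega>. \<Sum>k\<in>UNIV. t $ k * (X k \<omega> * lincomb X t \<omega> ^ n))"
    by (simp add: lincomb_def sum_distrib_right mult.assoc)
  then show ?thesis
    using integrable_X_mult_lincomb_power by simp
qed

definition moment_const :: real where
  "moment_const = 1 + (\<Sum>i\<in>UNIV. \<Sum>j\<in>UNIV. \<Sum>k\<in>UNIV. \<bar>\<alpha> i j k\<bar>)"

lemma moment_const_ge_1: "1 \<le> moment_const"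
  unfolding moment_const_def by (simp add: sum_nonneg)

lemma sum_abs_alpha_le: "(\<Sum>k\<in>UNIV. \<bar>\<alpha> i j k\<bar>) \<le> moment_const - 1"
proof -
  have "(\<Sum>k\<in>UNIV. \<bar>\<alpha> i j k\<bar>) \<le> (\<Sum>j'\<in>UNIV. \<Sum>k\<in>UNIV. \<bar>\<alpha> i j' k\<bar>)"
    by (rule member_le_sum) (auto intro: sum_nonneg)
  also have "\<dots> \<le> (\<Sum>i'\<in>UNIV. \<Sum>j'\<in>UNIV. \<Sum>k\<in>UNIV. \<bar>\<alpha> i' j' k\<bar>)"
    by (rule member_le_sum[where f = "\<lambda>i. \<Sum>j\<in>UNIV. \<Sum>k\<in>UNIV. \<bar>\<alpha> i j k\<bar>"]) (auto intro: sum_nonneg)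
  finally show ?thesis
    by (simp add: moment_const_def)
qed

lemma abs_sum_alpha_le:
  assumes "\<And>k. \<bar>z k\<bar> \<le> B"
  shows "\<bar>\<Sum>j\<in>UNIV. \<Sum>k\<in>UNIV. \<alpha> i j k * t $ j * z k\<bar> \<le> (moment_const - 1) * l1_norm t * B"
proof -
  have B: "0 \<le> B"
    using assms order_trans[OF abs_ge_zero] by blast
  have "\<bar>\<Sum>k\<in>UNIV. \<alpha> i j k * z k\<bar> \<le> (moment_const - 1) * B" for j
  proof -
    have "\<bar>\<Sum>k\<in>UNIV. \<alpha> i j k * z k\<bar> \<le> (\<Sum>k\<in>UNIV. \<bar>\<alpha> i j k\<bar> * B)"
      using assms by (intro order_trans[OF sum_abs] sum_mono) (simp add: abs_mult mult_left_mono)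
    also have "\<dots> = (\<Sum>k\<in>UNIV. \<bar>\<alpha> i j k\<bar>) * B"
      by (simp add: sum_distrib_right)
    also have "\<dots> \<le> (moment_const - 1) * B"
      using sum_abs_alpha_le[of i j] B by (rule mult_right_mono)
    finally show ?thesis .
  qed
  then have "\<bar>\<Sum>j\<in>UNIV. t $ j * (\<Sum>k\<in>UNIV. \<alpha> i j k * z k)\<bar> \<le> l1_norm t * ((moment_const - 1) * B)"
    by (rule abs_sum_le_l1_norm)
  then show ?thesis
    by (simp add: sum_distrib_left mult_ac)
qed

lemma moment_bound_step:
  assumes "\<bar>integral\<^sup>L M (\<lambda>\<omega>. lincomb X t \<omega> ^ n)\<bar> \<le> B"
    and "\<And>k. \<bar>integral\<^sup>L M (\<lambda>\<omega>. X k \<omega> * lincomb X t \<omega> ^ n)\<bar> \<le> B"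
  shows "\<bar>integral\<^sup>L M (\<lambda>\<omega>. lincomb X t \<omega> ^ Suc n)\<bar> \<le> l1_norm t * B"
    and "\<bar>integral\<^sup>L M (\<lambda>\<omega>. X i \<omega> * lincomb X t \<omega> ^ Suc n)\<bar>
      \<le> real (Suc n) * (moment_const * (l1_norm t * B))"
proof -
  show "\<bar>integral\<^sup>L M (\<lambda>\<omega>. lincomb X t \<omega> ^ Suc n)\<bar> \<le> l1_norm t * B"
    unfolding moment_recursion using assms(2) by (rule abs_sum_le_l1_norm)
  have "\<bar>t $ i\<bar> \<le> l1_norm t"
    unfolding l1_norm_def by (rule member_le_sum) auto
  then have "\<bar>t $ i * integral\<^sup>L M (\<lambda>\<omega>. lincomb X t \<omega> ^ n)\<bar> \<le> l1_norm t * B"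
    using assms(1) unfolding abs_mult by (intro mult_mono) auto
  moreover have "\<bar>\<Sum>j\<in>UNIV. \<Sum>k\<in>UNIV. \<alpha> i j k * t $ j * integral\<^sup>L M (\<lambda>\<omega>. X k \<omega> * lincomb X t \<omega> ^ n)\<bar>
      \<le> (moment_const - 1) * l1_norm t * B"
    using assms(2) by (rule abs_sum_alpha_le)
  ultimately have "\<bar>(\<Sum>j\<in>UNIV. \<Sum>k\<in>UNIV. \<alpha> i j k * t $ j * integral\<^sup>L M (\<lambda>\<omega>. X k \<omega> * lincomb X t \<omega> ^ n))
      + t $ i * integral\<^sup>L M (\<lambda>\<omega>. lincomb X t \<omega> ^ n)\<bar> \<le> moment_const * (l1_norm t * B)"
    by (simp add: algebra_simps)
  then show "\<bar>integral\<^sup>L M (\<lambda>\<omega>. X i \<omega> * lincomb X t \<omega> ^ Suc n)\<bar>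
      \<le> real (Suc n) * (moment_const * (l1_norm t * B))"
    unfolding X_moment_recursion abs_mult by (simp add: mult_left_mono)
qed

text \<open>The two moment sequences are bounded simultaneously, since each recursion feeds the other.\<close>
lemma moment_bounds:
  fixes t :: "real^'d"
  defines "B n \<equiv> fact n * (moment_const * l1_norm t) ^ n"
  shows "\<bar>integral\<^sup>L M (\<lambda>\<omega>. lincomb X t \<omega> ^ n)\<bar> \<le> B n \<and>
    (\<forall>i. \<bar>integral\<^sup>L M (\<lambda>\<omega>. X i \<omega> * lincomb X t \<omega> ^ n)\<bar> \<le> B n)"
proof (induction n)
  case 0
  then show ?case
    by (simp add: B_def prob_space X_mean_zero)
next
  case (Suc n)
  have B_Suc: "B (Suc n) = real (Suc n) * (moment_const * (l1_norm t * B n))"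
    by (simp add: B_def algebra_simps)
  have "0 \<le> l1_norm t * B n"
    unfolding B_def using moment_const_ge_1
    by (intro mult_nonneg_nonneg zero_le_power l1_norm_nonneg) simp_all
  moreover have "1 \<le> real (Suc n) * moment_const"
    using moment_const_ge_1 by (simp add: mult_ge1_I)
  ultimately have "l1_norm t * B n \<le> B (Suc n)"
    unfolding B_Suc using mult_left_mono[of 1 "real (Suc n) * moment_const" "l1_norm t * B n"]
    by (simp add: ac_simps)
  moreover have "\<bar>integral\<^sup>L M (\<lambda>\<omega>. lincomb X t \<omega> ^ Suc n)\<bar> \<le> l1_norm t * B n"
    "\<And>i. \<bar>integral\<^sup>L M (\<lambda>\<omega>. X i \<omega> * lincomb X t \<omega> ^ Suc n)\<bar> \<le> B (Suc n)"
    using moment_bound_step[where n = n and B = "B n"] Suc.IH unfolding B_Suc by blast+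
  ultimately show ?case
    by (blast intro: order_trans)
qed

end

section \<open>Exponential series and differentiation under the integral\<close>

lemma real_exp_sums: "(\<lambda>n. x ^ n / fact n) sums exp (x :: real)"
  using exp_converges[of x] by (simp add: divide_inverse_commute)

lemma sum_power_div_fact_le_exp:
  fixes x :: real
  assumes "0 \<le> x" "finite I"
  shows "(\<Sum>n\<in>I. x ^ n / fact n) \<le> exp x"
  using sum_le_suminf[OF sums_summable[OF real_exp_sums[of x]] assms(2)] assms(1)
    sums_unique[OF real_exp_sums[of x]] by simp

lemma abs_exp_partial_sum_le: "\<bar>\<Sum>n<N. y ^ n / fact n\<bar> \<le> exp \<bar>y\<bar>" for y :: real
proof -
  have "\<bar>\<Sum>n<N. y ^ n / fact n\<bar> \<le> (\<Sum>n<N. \<bar>y\<bar> ^ n / fact n)"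
    by (rule order_trans[OF sum_abs]) (simp add: power_abs)
  also have "\<dots> \<le> exp \<bar>y\<bar>"
    by (rule sum_power_div_fact_le_exp) auto
  finally show ?thesis .
qed

lemma power_le_fact_mult_exp:
  fixes c x :: real
  assumes "0 < c" "0 \<le> x"
  shows "x ^ m \<le> fact m / c ^ m * exp (c * x)"
proof -
  have "0 \<le> c * x"
    using assms by simp
  then have "(c * x) ^ m / fact m \<le> exp (c * x)"
    using sum_power_div_fact_le_exp[of "c * x" "{m}"] by simp
  then have "(c * x) ^ m / fact m * (fact m / c ^ m) \<le> exp (c * x) * (fact m / c ^ m)"
    using assms by (intro mult_right_mono) simp_all
  then show ?thesis
    using assms by (simp add: power_mult_distrib ac_simps)
qed

lemma abs_exp_sub_one_sub_le: "\<bar>exp u - 1 - u\<bar> \<le> u\<^sup>2 * exp \<bar>u\<bar>" for u :: real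
proof -
  obtain \<theta> where \<theta>: "\<bar>\<theta>\<bar> \<le> \<bar>u\<bar>" "exp u = (\<Sum>m<2. u ^ m / fact m) + exp \<theta> / fact 2 * u\<^sup>2"
    using Maclaurin_exp_le[of u 2] by blast
  then have "\<bar>exp u - 1 - u\<bar> = exp \<theta> / 2 * u\<^sup>2"
    by (simp add: eval_nat_numeral)
  also have "\<dots> \<le> exp \<bar>u\<bar> * u\<^sup>2"
  proof (rule mult_right_mono)
    have "exp \<theta> \<le> exp \<bar>u\<bar>"
      using abs_le_D1[OF \<theta>(1)] by simp
    then show "exp \<theta> / 2 \<le> exp \<bar>u\<bar>"
      using exp_gt_zero[of \<theta>] by linarith
  qed simp
  finally show ?thesis
    by (simp add: mult.commute)
qed

lemma exp_abs_le_exp_plus_exp_minus: "exp \<bar>a\<bar> \<le> exp a + exp (- a)" for a :: real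
  by (simp add: abs_if add_increasing add_increasing2 less_imp_le)

lemma exp_abs_add_abs_le: "exp (\<bar>a\<bar> + \<bar>b\<bar>) \<le> exp \<bar>a + b\<bar> + exp \<bar>a - b\<bar>" for a b :: real
proof (cases "\<bar>a\<bar> + \<bar>b\<bar> = \<bar>a + b\<bar>")
  case True
  then show ?thesis
    using exp_gt_zero[of "\<bar>a - b\<bar>"] by simp
next
  case False
  then have "\<bar>a\<bar> + \<bar>b\<bar> = \<bar>a - b\<bar>"
    by linarith
  then show ?thesis
    using exp_gt_zero[of "\<bar>a + b\<bar>"] by simp
qed

lemma add_mult_le_abs_add: "\<bar>s\<bar> \<le> r \<Longrightarrow> y + s * x \<le> \<bar>y\<bar> + r * \<bar>x\<bar>" for r s x y :: real
proof -
  assume "\<bar>s\<bar> \<le> r"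
  then have "\<bar>s\<bar> * \<bar>x\<bar> \<le> r * \<bar>x\<bar>"
    by (rule mult_right_mono) simp
  moreover have "s * x \<le> \<bar>s\<bar> * \<bar>x\<bar>"
    by (simp flip: abs_mult)
  ultimately show ?thesis
    by linarith
qed

lemma integrable_abs_le:
  fixes f g :: "'a \<Rightarrow> real"
  assumes "integrable M f" "g \<in> borel_measurable M" "\<And>\<omega>. \<bar>g \<omega>\<bar> \<le> f \<omega>"
  shows "integrable M g"
proof (rule Bochner_Integration.integrable_bound[OF assms(1,2)])
  show "AE \<omega> in M. norm (g \<omega>) \<le> norm (f \<omega>)"
    using assms(3) by (intro AE_I2) (simp add: order_trans[OF _ abs_ge_self])
qed

lemma integrable_exp_plus_exp_minus_of_moment_bound:
  fixes y :: "'a \<Rightarrow> real"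
  assumes int: "\<And>n. integrable M (\<lambda>\<omega>. y \<omega> ^ n)"
    and bound: "\<And>n. \<bar>integral\<^sup>L M (\<lambda>\<omega>. y \<omega> ^ n)\<bar> \<le> fact n * q ^ n"
    and q: "0 \<le> q" "q < 1"
  shows "integrable M (\<lambda>\<omega>. exp (y \<omega>) + exp (- y \<omega>))"
proof -
  define f where "f n = (\<lambda>\<omega>. if even n then 2 * y \<omega> ^ n / fact n else 0)" for n
  have f_nonneg: "0 \<le> f n \<omega>" for n \<omega>
    by (simp add: f_def zero_le_even_power)
  have f_sums: "(\<lambda>n. f n \<omega>) sums (exp (y \<omega>) + exp (- y \<omega>))" for \<omega>
  proof -
    have "y \<omega> ^ n / fact n + (- y \<omega>) ^ n / fact n = f n \<omega>" for n
      by (cases "even n") (simp_all add: f_def)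
    then show ?thesis
      using sums_add[OF real_exp_sums[of "y \<omega>"] real_exp_sums[of "- y \<omega>"]] by simp
  qed
  have f_int: "integrable M (f n)" for n
    by (cases "even n") (auto simp: f_def intro!: integrable_divide_zero integrable_mult_right int)
  have "integral\<^sup>L M (\<lambda>\<omega>. norm (f n \<omega>)) \<le> 2 * q ^ n" for n
  proof -
    have "integral\<^sup>L M (\<lambda>\<omega>. norm (f n \<omega>)) = integral\<^sup>L M (f n)"
      using f_nonneg by simp
    also have "\<dots> \<le> 2 * \<bar>integral\<^sup>L M (\<lambda>\<omega>. y \<omega> ^ n)\<bar> / fact n"
      by (cases "even n") (simp_all add: f_def divide_right_mono)
    also have "\<dots> \<le> 2 * (fact n * q ^ n) / fact n"
      using bound[of n] by (intro divide_right_mono mult_left_mono) auto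
    finally show ?thesis
      by simp
  qed
  then have "summable (\<lambda>n. integral\<^sup>L M (\<lambda>\<omega>. norm (f n \<omega>)))"
    using q by (intro summable_comparison_test'[OF summable_mult[OF summable_geometric, of q 2]]) auto
  moreover have "AE \<omega> in M. summable (\<lambda>n. norm (f n \<omega>))"
    using f_sums f_nonneg by (intro AE_I2) (simp add: sums_iff)
  ultimately have "integrable M (\<lambda>\<omega>. \<Sum>n. f n \<omega>)"
    by (intro integrable_suminf[OF f_int])
  then show ?thesis
    using f_sums by (simp add: sums_iff)
qed

lemma integrable_exp_abs_of_moment_bound:
  fixes y :: "'a \<Rightarrow> real"
  assumes "\<And>n. integrable M (\<lambda>\<omega>. y \<omega> ^ n)"
    and "\<And>n. \<bar>integral\<^sup>L M (\<lambda>\<omega>. y \<omega> ^ n)\<bar> \<le> fact n * q ^ n"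
    and "0 \<le> q" "q < 1"
  shows "integrable M (\<lambda>\<omega>. exp \<bar>y \<omega>\<bar>)"
proof (rule integrable_abs_le[OF integrable_exp_plus_exp_minus_of_moment_bound[OF assms]])
  have "y \<in> borel_measurable M"
    using borel_measurable_integrable[OF assms(1)[of 1]] by simp
  then show "(\<lambda>\<omega>. exp \<bar>y \<omega>\<bar>) \<in> borel_measurable M"
    by measurable
qed (simp add: exp_abs_le_exp_plus_exp_minus)

lemma sums_integral_mult_exp:
  fixes g y :: "'a \<Rightarrow> real"
  assumes [measurable]: "g \<in> borel_measurable M" "y \<in> borel_measurable M"
    and int: "integrable M (\<lambda>\<omega>. \<bar>g \<omega>\<bar> * exp \<bar>y \<omega>\<bar>)"
  shows "(\<lambda>n. integral\<^sup>L M (\<lambda>\<omega>. g \<omega> * y \<omega> ^ n) / fact n) sums integral\<^sup>L M (\<lambda>\<omega>. g \<omega> * exp (y \<omega>))"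
proof -
  define E where "E N \<omega> = (\<Sum>n<N. y \<omega> ^ n / fact n)" for N \<omega>
  have int_term: "integrable M (\<lambda>\<omega>. g \<omega> * y \<omega> ^ n / fact n)" for n
  proof (rule integrable_abs_le[OF int])
    fix \<omega>
    have "\<bar>y \<omega>\<bar> ^ n / fact n \<le> exp \<bar>y \<omega>\<bar>"
      using sum_power_div_fact_le_exp[of "\<bar>y \<omega>\<bar>" "{n}"] by simp
    then have "\<bar>g \<omega>\<bar> * (\<bar>y \<omega>\<bar> ^ n / fact n) \<le> \<bar>g \<omega>\<bar> * exp \<bar>y \<omega>\<bar>"
      by (rule mult_left_mono) simp
    then show "\<bar>g \<omega> * y \<omega> ^ n / fact n\<bar> \<le> \<bar>g \<omega>\<bar> * exp \<bar>y \<omega>\<bar>"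
      by (simp add: abs_mult power_abs)
  qed measurable
  have partial_sums: "(\<Sum>n<N. integral\<^sup>L M (\<lambda>\<omega>. g \<omega> * y \<omega> ^ n) / fact n) = integral\<^sup>L M (\<lambda>\<omega>. g \<omega> * E N \<omega>)" for N
    using int_term by (simp add: E_def sum_distrib_left Bochner_Integration.integral_sum)
  have "(\<lambda>N. integral\<^sup>L M (\<lambda>\<omega>. g \<omega> * E N \<omega>)) \<longlonglongrightarrow> integral\<^sup>L M (\<lambda>\<omega>. g \<omega> * exp (y \<omega>))"
  proof (rule integral_dominated_convergence[OF _ _ int])
    show "AE \<omega> in M. (\<lambda>N. g \<omega> * E N \<omega>) \<longlonglongrightarrow> g \<omega> * exp (y \<omega>)"
      using real_exp_sums unfolding E_def sums_def by (intro AE_I2 tendsto_mult_left) blast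
    show "AE \<omega> in M. norm (g \<omega> * E N \<omega>) \<le> \<bar>g \<omega>\<bar> * exp \<bar>y \<omega>\<bar>" for N
      unfolding E_def using abs_exp_partial_sum_le
      by (intro AE_I2) (simp add: abs_mult mult_left_mono)
  qed (simp_all add: E_def)
  then show ?thesis
    by (simp add: sums_def partial_sums)
qed

lemma has_real_derivative_of_quadratic_remainder:
  assumes "0 < d" and remainder: "\<And>s. \<bar>s\<bar> \<le> d \<Longrightarrow> \<bar>g s - g 0 - s * D\<bar> \<le> K * s\<^sup>2"
  shows "(g has_real_derivative D) (at 0)"
proof -
  have "eventually (\<lambda>h. norm ((g h - g 0) / h - D) \<le> K * \<bar>h\<bar>) (at 0)"
    unfolding eventually_at
  proof (intro exI[of _ d] conjI ballI impI)
    fix h :: real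
    assume h: "h \<noteq> 0 \<and> dist h 0 < d"
    then have "norm ((g h - g 0) / h - D) = \<bar>g h - g 0 - h * D\<bar> / \<bar>h\<bar>"
      by (simp add: field_simps)
    also have "\<dots> \<le> K * h\<^sup>2 / \<bar>h\<bar>"
      using h remainder[of h] by (intro divide_right_mono) auto
    also have "\<dots> = K * \<bar>h\<bar>"
      using h by (auto simp: power2_eq_square abs_if field_simps)
    finally show "norm ((g h - g 0) / h - D) \<le> K * \<bar>h\<bar>" .
  qed (rule assms(1))
  moreover have "((\<lambda>h. K * \<bar>h\<bar>) \<longlongrightarrow> 0) (at 0)"
    by (rule tendsto_eq_intros) (auto intro!: tendsto_eq_intros)
  ultimately have "((\<lambda>h. (g h - g 0) / h - D) \<longlongrightarrow> 0) (at 0)"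
    by (rule Lim_null_comparison)
  then have "((\<lambda>h. (g h - g 0) / h) \<longlongrightarrow> D) (at 0)"
    using tendsto_add[OF _ tendsto_const[of D]] by fastforce
  then show ?thesis
    by (simp add: has_field_derivative_iff)
qed

lemma abs_exp_add_mult_remainder_le:
  fixes r s x y :: real
  assumes "\<bar>s\<bar> \<le> r"
  shows "\<bar>exp (y + s * x) - exp y - s * (x * exp y)\<bar> \<le> s\<^sup>2 * (x\<^sup>2 * exp (y + r * \<bar>x\<bar>))"
proof -
  have "exp (y + s * x) - exp y - s * (x * exp y) = exp y * (exp (s * x) - 1 - s * x)"
    by (simp add: exp_add algebra_simps)
  then have "\<bar>exp (y + s * x) - exp y - s * (x * exp y)\<bar> = exp y * \<bar>exp (s * x) - 1 - s * x\<bar>"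
    by (simp add: abs_mult)
  also have "\<dots> \<le> exp y * ((s * x)\<^sup>2 * exp (r * \<bar>x\<bar>))"
  proof (rule mult_left_mono)
    have "\<bar>s * x\<bar> \<le> r * \<bar>x\<bar>"
      using assms by (simp add: abs_mult mult_right_mono)
    then have "(s * x)\<^sup>2 * exp \<bar>s * x\<bar> \<le> (s * x)\<^sup>2 * exp (r * \<bar>x\<bar>)"
      by (intro mult_left_mono) simp_all
    then show "\<bar>exp (s * x) - 1 - s * x\<bar> \<le> (s * x)\<^sup>2 * exp (r * \<bar>x\<bar>)"
      using abs_exp_sub_one_sub_le[of "s * x"] by linarith
  qed simp
  finally show ?thesis
    by (simp add: exp_add power_mult_distrib mult_ac)
qed

lemma has_real_derivative_integral_exp:
  assumes [measurable]: "x \<in> borel_measurable M" "y \<in> borel_measurable M"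
    and "0 < r"
    and int_shift: "\<And>s. \<bar>s\<bar> \<le> r \<Longrightarrow> integrable M (\<lambda>\<omega>. exp (y \<omega> + s * x \<omega>))"
    and int_deriv: "integrable M (\<lambda>\<omega>. x \<omega> * exp (y \<omega>))"
    and int_rem: "integrable M (\<lambda>\<omega>. (x \<omega>)\<^sup>2 * exp (y \<omega> + r * \<bar>x \<omega>\<bar>))"
  shows "((\<lambda>s. integral\<^sup>L M (\<lambda>\<omega>. exp (y \<omega> + s * x \<omega>))) has_real_derivative
      integral\<^sup>L M (\<lambda>\<omega>. x \<omega> * exp (y \<omega>))) (at 0)"
proof (rule has_real_derivative_of_quadratic_remainder[OF \<open>0 < r\<close>])
  fix s :: real
  assume s: "\<bar>s\<bar> \<le> r"
  let ?R = "\<lambda>\<omega>. exp (y \<omega> + s * x \<omega>) - exp (y \<omega>) - s * (x \<omega> * exp (y \<omega>))"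
  note ints = int_shift[OF s] int_shift[of 0] int_deriv int_rem
  have "\<bar>integral\<^sup>L M ?R\<bar> \<le> integral\<^sup>L M (\<lambda>\<omega>. \<bar>?R \<omega>\<bar>)"
    using integral_norm_bound[of M ?R] by simp
  also have "\<dots> \<le> integral\<^sup>L M (\<lambda>\<omega>. s\<^sup>2 * ((x \<omega>)\<^sup>2 * exp (y \<omega> + r * \<bar>x \<omega>\<bar>)))"
    using ints \<open>0 < r\<close> abs_exp_add_mult_remainder_le[OF s] by (intro integral_mono) auto
  finally have "\<bar>integral\<^sup>L M ?R\<bar> \<le> integral\<^sup>L M (\<lambda>\<omega>. (x \<omega>)\<^sup>2 * exp (y \<omega> + r * \<bar>x \<omega>\<bar>)) * s\<^sup>2"
    by (simp add: mult.commute)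
  moreover have "integral\<^sup>L M ?R = integral\<^sup>L M (\<lambda>\<omega>. exp (y \<omega> + s * x \<omega>)) -
      integral\<^sup>L M (\<lambda>\<omega>. exp (y \<omega> + 0 * x \<omega>)) - s * integral\<^sup>L M (\<lambda>\<omega>. x \<omega> * exp (y \<omega>))"
    using ints \<open>0 < r\<close> by simp
  ultimately show "\<bar>integral\<^sup>L M (\<lambda>\<omega>. exp (y \<omega> + s * x \<omega>)) - integral\<^sup>L M (\<lambda>\<omega>. exp (y \<omega> + 0 * x \<omega>))
      - s * integral\<^sup>L M (\<lambda>\<omega>. x \<omega> * exp (y \<omega>))\<bar>
      \<le> integral\<^sup>L M (\<lambda>\<omega>. (x \<omega>)\<^sup>2 * exp (y \<omega> + r * \<bar>x \<omega>\<bar>)) * s\<^sup>2"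
    by simp
qed

section \<open>The Laplace transform near the origin\<close>

lemma lincomb_add_axis: "lincomb X (t + s *\<^sub>R axis k 1) \<omega> = lincomb X t \<omega> + s * X k \<omega>"
proof -
  have "(t + s *\<^sub>R axis k 1) $ j * X j \<omega> = t $ j * X j \<omega> + (if j = k then s * X k \<omega> else 0)" for j
    by (simp add: axis_def distrib_right)
  then show ?thesis
    by (simp add: lincomb_def sum.distrib)
qed

lemma l1_norm_add_axis_le: "l1_norm (t + s *\<^sub>R axis k 1) \<le> l1_norm t + \<bar>s\<bar>"
proof -
  have "\<bar>(t + s *\<^sub>R axis k 1) $ j\<bar> \<le> \<bar>t $ j\<bar> + (if j = k then \<bar>s\<bar> else 0)" for j
    by (simp add: axis_def abs_triangle_ineq)
  then have "l1_norm (t + s *\<^sub>R axis k 1) \<le> (\<Sum>j\<in>UNIV. \<bar>t $ j\<bar> + (if j = k then \<bar>s\<bar> else 0))"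
    unfolding l1_norm_def by (rule sum_mono)
  also have "\<dots> = l1_norm t + \<bar>s\<bar>"
    by (simp add: l1_norm_def sum.distrib)
  finally show ?thesis .
qed

lemma laplace_eq_integral_lincomb: "laplace M X t = integral\<^sup>L M (\<lambda>\<omega>. exp (lincomb X t \<omega>))"
  by (simp add: laplace_def lincomb_def)

context meixner
begin

lemma borel_measurable_lincomb [measurable]: "lincomb X t \<in> borel_measurable M"
  by (rule borel_measurable_poly_rv[OF lincomb_in_poly_rv])

lemma integrable_exp_abs_lincomb:
  assumes "l1_norm t < 1 / moment_const"
  shows "integrable M (\<lambda>\<omega>. exp \<bar>lincomb X t \<omega>\<bar>)"
proof (rule integrable_exp_abs_of_moment_bound)
  show "\<bar>integral\<^sup>L M (\<lambda>\<omega>. lincomb X t \<omega> ^ n)\<bar> \<le> fact n * (moment_const * l1_norm t) ^ n" for n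
    using moment_bounds by blast
  show "0 \<le> moment_const * l1_norm t" "moment_const * l1_norm t < 1"
    using assms moment_const_ge_1 l1_norm_nonneg[of t] by (auto simp: field_simps)
qed (rule integrable_lincomb_power)

lemma integrable_exp_lincomb:
  assumes "l1_norm t < 1 / moment_const"
  shows "integrable M (\<lambda>\<omega>. exp (lincomb X t \<omega>))"
  by (rule integrable_abs_le[OF integrable_exp_abs_lincomb[OF assms]]) auto

lemma integrable_exp_abs_lincomb_plus:
  assumes "l1_norm t + c < 1 / moment_const" "0 \<le> c"
  shows "integrable M (\<lambda>\<omega>. exp (\<bar>lincomb X t \<omega>\<bar> + c * \<bar>X k \<omega>\<bar>))"
proof (rule integrable_abs_le)
  have "integrable M (\<lambda>\<omega>. exp \<bar>lincomb X t \<omega> + s * X k \<omega>\<bar>)" if "\<bar>s\<bar> = c" for s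
  proof -
    have "l1_norm (t + s *\<^sub>R axis k 1) < 1 / moment_const"
      using l1_norm_add_axis_le[of t s k] assms that by linarith
    then show ?thesis
      using integrable_exp_abs_lincomb[of "t + s *\<^sub>R axis k 1"] by (simp add: lincomb_add_axis)
  qed
  from this[of c] this[of "- c"]
  show "integrable M (\<lambda>\<omega>. exp \<bar>lincomb X t \<omega> + c * X k \<omega>\<bar> + exp \<bar>lincomb X t \<omega> - c * X k \<omega>\<bar>)"
    using \<open>0 \<le> c\<close> by simp
  show "\<bar>exp (\<bar>lincomb X t \<omega>\<bar> + c * \<bar>X k \<omega>\<bar>)\<bar> \<le>
      exp \<bar>lincomb X t \<omega> + c * X k \<omega>\<bar> + exp \<bar>lincomb X t \<omega> - c * X k \<omega>\<bar>" for \<omega>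
    using exp_abs_add_abs_le[of "lincomb X t \<omega>" "c * X k \<omega>"] \<open>0 \<le> c\<close> by (simp add: abs_mult)
qed measurable

lemma integrable_power_exp_abs_lincomb:
  assumes "l1_norm t + 2 * c < 1 / moment_const" "0 < c"
  shows "integrable M (\<lambda>\<omega>. \<bar>X k \<omega>\<bar> ^ m * exp (\<bar>lincomb X t \<omega>\<bar> + c * \<bar>X k \<omega>\<bar>))"
proof (rule integrable_abs_le)
  show "integrable M (\<lambda>\<omega>. fact m / c ^ m * exp (\<bar>lincomb X t \<omega>\<bar> + (2 * c) * \<bar>X k \<omega>\<bar>))"
    using assms by (intro integrable_mult_right integrable_exp_abs_lincomb_plus) auto
  show "\<bar>\<bar>X k \<omega>\<bar> ^ m * exp (\<bar>lincomb X t \<omega>\<bar> + c * \<bar>X k \<omega>\<bar>)\<bar>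
      \<le> fact m / c ^ m * exp (\<bar>lincomb X t \<omega>\<bar> + (2 * c) * \<bar>X k \<omega>\<bar>)" for \<omega>
  proof -
    have "\<bar>X k \<omega>\<bar> ^ m * exp (\<bar>lincomb X t \<omega>\<bar> + c * \<bar>X k \<omega>\<bar>)
        \<le> fact m / c ^ m * exp (c * \<bar>X k \<omega>\<bar>) * exp (\<bar>lincomb X t \<omega>\<bar> + c * \<bar>X k \<omega>\<bar>)"
      using power_le_fact_mult_exp[OF \<open>0 < c\<close>, of "\<bar>X k \<omega>\<bar>" m] by (intro mult_right_mono) auto
    also have "\<dots> = fact m / c ^ m * exp (\<bar>lincomb X t \<omega>\<bar> + (2 * c) * \<bar>X k \<omega>\<bar>)"
    proof -
      have "c * \<bar>X k \<omega>\<bar> + (\<bar>lincomb X t \<omega>\<bar> + c * \<bar>X k \<omega>\<bar>) = \<bar>lincomb X t \<omega>\<bar> + (2 * c) * \<bar>X k \<omega>\<bar>"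
        by algebra
      then show ?thesis
        by (simp only: mult.assoc exp_add[symmetric])
    qed
    finally show ?thesis
      by simp
  qed
qed measurable

lemma has_real_derivative_laplace_axis:
  assumes t: "l1_norm t < 1 / (2 * moment_const)"
  shows "((\<lambda>s. laplace M X (t + s *\<^sub>R axis i 1)) has_real_derivative
      integral\<^sup>L M (\<lambda>\<omega>. X i \<omega> * exp (lincomb X t \<omega>))) (at 0)"
proof -
  define r where "r = 1 / (4 * moment_const)"
  have r: "0 < r" "l1_norm t + 2 * r < 1 / moment_const"
    using t moment_const_ge_1 by (auto simp: r_def field_simps)
  note bound = integrable_power_exp_abs_lincomb[OF r(2) r(1), of i]
  have "((\<lambda>s. integral\<^sup>L M (\<lambda>\<omega>. exp (lincomb X t \<omega> + s * X i \<omega>))) has_real_derivative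
      integral\<^sup>L M (\<lambda>\<omega>. X i \<omega> * exp (lincomb X t \<omega>))) (at 0)"
  proof (rule has_real_derivative_integral_exp[OF _ _ r(1)])
    show "integrable M (\<lambda>\<omega>. exp (lincomb X t \<omega> + s * X i \<omega>))" if "\<bar>s\<bar> \<le> r" for s
      using add_mult_le_abs_add[OF that] by (intro integrable_abs_le[OF bound[of 0]]) simp_all
    show "integrable M (\<lambda>\<omega>. X i \<omega> * exp (lincomb X t \<omega>))"
      using add_mult_le_abs_add[of 0 r] r(1)
      by (intro integrable_abs_le[OF bound[of 1]]) (simp_all add: abs_mult mult_left_mono)
    show "integrable M (\<lambda>\<omega>. (X i \<omega>)\<^sup>2 * exp (lincomb X t \<omega> + r * \<bar>X i \<omega>\<bar>))"
      using r(1) by (intro integrable_abs_le[OF bound[of 2]]) (simp_all add: abs_mult mult_left_mono)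
  qed simp_all
  then show ?thesis
    by (simp add: laplace_eq_integral_lincomb lincomb_add_axis)
qed

lemma integral_X_mult_exp_lincomb:
  assumes t: "l1_norm t < 1 / (2 * moment_const)"
  shows "integral\<^sup>L M (\<lambda>\<omega>. X i \<omega> * exp (lincomb X t \<omega>)) =
    (\<Sum>j\<in>UNIV. \<Sum>k\<in>UNIV. \<alpha> i j k * t $ j * integral\<^sup>L M (\<lambda>\<omega>. X k \<omega> * exp (lincomb X t \<omega>)))
      + t $ i * integral\<^sup>L M (\<lambda>\<omega>. exp (lincomb X t \<omega>))"
proof -
  define r where "r = 1 / (4 * moment_const)"
  have r: "0 < r" "l1_norm t + 2 * r < 1 / moment_const"
    using t moment_const_ge_1 by (auto simp: r_def field_simps)
  define a where "a = (\<lambda>k n. integral\<^sup>L M (\<lambda>\<omega>. X k \<omega> * lincomb X t \<omega> ^ n) / fact n)"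
  define e where "e = (\<lambda>n. integral\<^sup>L M (\<lambda>\<omega>. lincomb X t \<omega> ^ n) / fact n)"
  have a_sums: "a k sums integral\<^sup>L M (\<lambda>\<omega>. X k \<omega> * exp (lincomb X t \<omega>))" for k
    unfolding a_def
  proof (rule sums_integral_mult_exp)
    show "integrable M (\<lambda>\<omega>. \<bar>X k \<omega>\<bar> * exp \<bar>lincomb X t \<omega>\<bar>)"
      using r(1) by (intro integrable_abs_le[OF integrable_power_exp_abs_lincomb[OF r(2) r(1), of k 1]])
        (simp_all add: mult_left_mono)
  qed simp_all
  have e_sums: "e sums integral\<^sup>L M (\<lambda>\<omega>. exp (lincomb X t \<omega>))"
    using sums_integral_mult_exp[of "\<lambda>_. 1" M "lincomb X t"] integrable_exp_abs_lincomb t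
      moment_const_ge_1 by (simp add: e_def field_simps)
  have a_Suc: "a i (Suc n) = (\<Sum>j\<in>UNIV. \<Sum>k\<in>UNIV. \<alpha> i j k * t $ j * a k n) + t $ i * e n" for n
    unfolding a_def e_def X_moment_recursion
    by (simp add: sum_divide_distrib add_divide_distrib mult.assoc)
  have lhs: "(\<lambda>n. a i (Suc n)) sums integral\<^sup>L M (\<lambda>\<omega>. X i \<omega> * exp (lincomb X t \<omega>))"
  proof -
    have "a i 0 = 0"
      using X_mean_zero[of i] by (simp add: a_def)
    then show ?thesis
      using a_sums[of i] by (simp add: sums_Suc_iff)
  qed
  have rhs: "(\<lambda>n. (\<Sum>j\<in>UNIV. \<Sum>k\<in>UNIV. \<alpha> i j k * t $ j * a k n) + t $ i * e n) sums
      ((\<Sum>j\<in>UNIV. \<Sum>k\<in>UNIV. \<alpha> i j k * t $ j * integral\<^sup>L M (\<lambda>\<omega>. X k \<omega> * exp (lincomb X t \<omega>)))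
        + t $ i * integral\<^sup>L M (\<lambda>\<omega>. exp (lincomb X t \<omega>)))"
    by (intro sums_add sums_sum sums_mult a_sums e_sums)
  show ?thesis
    using sums_unique2[OF lhs[unfolded a_Suc] rhs] .
qed

lemma laplace_pde:
  assumes t: "l1_norm t < 1 / (2 * moment_const)"
  shows "integrable M (\<lambda>\<omega>. exp (lincomb X t \<omega>))"
    and "has_partial (laplace M X) i t"
    and "partial (laplace M X) i t =
      (\<Sum>j\<in>UNIV. \<Sum>k\<in>UNIV. \<alpha> i j k * t $ j * partial (laplace M X) k t) + t $ i * laplace M X t"
proof -
  show "integrable M (\<lambda>\<omega>. exp (lincomb X t \<omega>))"
    using t moment_const_ge_1 by (intro integrable_exp_lincomb) (simp add: field_simps)
  note D = has_real_derivative_laplace_axis[OF t]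
  show "has_partial (laplace M X) i t"
    unfolding has_partial_def by (rule differentiableI[OF has_field_derivative_imp_has_derivative[OF D]])
  have partial: "partial (laplace M X) k t = integral\<^sup>L M (\<lambda>\<omega>. X k \<omega> * exp (lincomb X t \<omega>))" for k
    unfolding partial_def by (rule DERIV_imp_deriv[OF D])
  show "partial (laplace M X) i t =
      (\<Sum>j\<in>UNIV. \<Sum>k\<in>UNIV. \<alpha> i j k * t $ j * partial (laplace M X) k t) + t $ i * laplace M X t"
    unfolding partial laplace_eq_integral_lincomb by (rule integral_X_mult_exp_lincomb[OF t])
qed

lemma laplace_pde_near_origin:
  "\<exists>V. open V \<and> 0 \<in> V \<and> (\<forall>t\<in>V.
    integrable M (\<lambda>\<omega>. exp (lincomb X t \<omega>)) \<and>
    (\<forall>i. has_partial (laplace M X) i t) \<and>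
    (\<forall>i. partial (laplace M X) i t =
      (\<Sum>j\<in>UNIV. \<Sum>k\<in>UNIV. \<alpha> i j k * t $ j * partial (laplace M X) k t) + t $ i * laplace M X t))"
proof (intro exI conjI)
  let ?V = "{t :: real^'d. l1_norm t < 1 / (2 * moment_const)}"
  show "open ?V"
    unfolding l1_norm_def by (intro open_Collect_less continuous_intros)
  show "0 \<in> ?V"
    using moment_const_ge_1 by (simp add: l1_norm_def)
  show "\<forall>t\<in>?V. integrable M (\<lambda>\<omega>. exp (lincomb X t \<omega>)) \<and>
    (\<forall>i. has_partial (laplace M X) i t) \<and>
    (\<forall>i. partial (laplace M X) i t =
      (\<Sum>j\<in>UNIV. \<Sum>k\<in>UNIV. \<alpha> i j k * t $ j * partial (laplace M X) k t) + t $ i * laplace M X t)"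
    using laplace_pde by blast
qed

end

theorem mainTheorem6:
  fixes M :: "'a measure" and X :: "'d::finite \<Rightarrow> 'a \<Rightarrow> real"
    and \<alpha> :: "'d \<Rightarrow> 'd \<Rightarrow> 'd \<Rightarrow> real" and \<beta> :: "'d \<Rightarrow> 'd \<Rightarrow> real"
  assumes "prob_space M"
    and "\<And>i. X i \<in> borel_measurable M"
    and "\<And>i n. integrable M (\<lambda>\<omega>. \<bar>X i \<omega>\<bar> ^ n)"
    and "meixner1 M X \<alpha> \<beta>"
    and "nondegenerate M X"
    and "\<And>k. integral\<^sup>L M (X k) = 0"
    and "\<And>i j. integral\<^sup>L M (\<lambda>\<omega>. X i \<omega> * X j \<omega>) = (if i = j then 1 else 0)"
  shows "(\<forall>i j. \<beta> i j = (if i = j then 1 else 0)) \<and>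
    (\<exists>V. open V \<and> 0 \<in> V \<and> (\<forall>t\<in>V.
       integrable M (\<lambda>\<omega>. exp (\<Sum>k\<in>UNIV. t $ k * X k \<omega>)) \<and>
       (\<forall>i. has_partial (laplace M X) i t) \<and>
       (\<forall>i. partial (laplace M X) i t =
          (\<Sum>j\<in>UNIV. \<Sum>k\<in>UNIV. \<alpha> i j k * t $ j * partial (laplace M X) k t)
          + t $ i * laplace M X t)))"
proof -
  interpret meixner M X \<alpha> \<beta>
  proof -
    interpret prob_space M
      by (rule assms(1))
    show "meixner M X \<alpha> \<beta>"
      by unfold_locales (use assms in auto)
  qed
  show ?thesis
    using beta_eq_delta laplace_pde_near_origin unfolding lincomb_def by blast
qed

end
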